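(* Let $\mathfrak{U}$ be a Banach algebra such that $\mathfrak{U}^\sharp$ is symmetrically pseudo-amenable, with a symmetric approximate diagonal $\{\mathbf{t}_\lambda\}_{\lambda\in\Lambda}\subseteq\mathfrak{U}^\sharp\widehat{\otimes}\mathfrak{U}^\sharp$. Let $X$ be a Banach $\mathfrak{U}$-bimodule such that (i) for each $x\in X$ the net $\{\psi_x(\mathbf{t}_\lambda)\}_{\lambda\in\Lambda}$ is bounded, and (ii) for each bounded Jordan derivation $D:\mathfrak{U}\to X$ the net $\{\Phi_D(\mathbf{t}_\lambda)\}_{\lambda\in\Lambda}$ is bounded. Then every bounded Jordan derivation from $\mathfrak{U}$ into $X$ is a derivation.
   Context: $\mathfrak{U}^\sharp=\mathfrak{U}\oplus\mathbb{C}1$ is the unitization of $\mathfrak{U}$ with the $\ell^1$-norm (a unit is adjoined even if $\mathfrak{U}$ is unital); a Banach $\mathfrak{U}$-bimodule $X$ is made a unital Banach $\mathfrak{U}^\sharp$-bimodule by $1x=x1=x$. For $x\in X$, $\psi_x:\mathfrak{U}^\sharp\widehat{\otimes}\mathfrak{U}^\sharp\to X$ is the bounded linear map with $\psi_x(a\otimes b)=axb$. For a bounded linear map $T:\mathfrak{U}\to X$, extended to $\mathfrak{U}^\sharp$ by $T(1)=0$, $\Phi_T:\mathfrak{U}^\sharp\widehat{\otimes}\mathfrak{U}^\sharp\to X$ is the bounded linear map with $\Phi_T(a\otimes b)=aT(b)$. A linear map $\delta:\mathfrak{U}\to X$ is a derivation if $\delta(ab)=\delta(a)b+a\delta(b)$,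 and a Jordan derivation if $\delta(ab+ba)=\delta(a)b+a\delta(b)+\delta(b)a+b\delta(a)$, for all $a,b$. For a Banach algebra $\mathfrak{A}$, $\mathfrak{A}\widehat{\otimes}\mathfrak{A}$ is the projective tensor product with $a(b\otimes c)=ab\otimes c$, $(b\otimes c)a=b\otimes ca$, $\pi(b\otimes c)=bc$ (extended linearly and continuously); the flip is $(b\otimes c)^\circ=c\otimes b$ and $\mathbf{t}$ is symmetric if $\mathbf{t}^\circ=\mathbf{t}$. A symmetric approximate diagonal is a net $\{\mathbf{t}_\lambda\}$ (not necessarily bounded) of symmetric elements with $a\mathbf{t}_\lambda-\mathbf{t}_\lambda a\to0$ and $\pi(\mathbf{t}_\lambda)a\to a$ for all $a\in\mathfrak{A}$; $\mathfrak{A}$ is symmetrically pseudo-amenable if it has one. *)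

theory Defs
  imports "HOL-Analysis.Analysis"
begin

text \<open>The library only has real normed spaces. A complex Banach algebra is modelled
as a real Banach algebra (type class) together with a complex scalar multiplication
scA compatible with the real one, the ring structure and the norm.\<close>

definition complex_banach_space :: "(complex \<Rightarrow> 'x::banach \<Rightarrow> 'x) \<Rightarrow> bool" where
  "complex_banach_space sc \<longleftrightarrow>
     (\<forall>r x. sc (complex_of_real r) x = r *\<^sub>R x) \<and>
     (\<forall>c d x. sc (c + d) x = sc c x + sc d x) \<and>
     (\<forall>c x y. sc c (x + y) = sc c x + sc c y) \<and>
     (\<forall>c d x. sc (c * d) x = sc c (sc d x)) \<and>
     (\<forall>c x. norm (sc c x) = cmod c * norm x)"

definition complex_banach_algebra ::
    "(complex \<Rightarrow> 'a::{real_normed_algebra,banach} \<Rightarrow> 'a) \<Rightarrow> bool" where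
  "complex_banach_algebra sc \<longleftrightarrow> complex_banach_space sc \<and>
     (\<forall>c a b. sc c (a * b) = sc c a * b \<and> sc c (a * b) = a * sc c b)"

definition banach_bimodule ::
    "(complex \<Rightarrow> 'a::{real_normed_algebra,banach} \<Rightarrow> 'a) \<Rightarrow> (complex \<Rightarrow> 'x::banach \<Rightarrow> 'x)
     \<Rightarrow> ('a \<Rightarrow> 'x \<Rightarrow> 'x) \<Rightarrow> ('x \<Rightarrow> 'a \<Rightarrow> 'x) \<Rightarrow> bool" where
  "banach_bimodule scA scX lm rm \<longleftrightarrow>
     (\<forall>a b x. lm (a + b) x = lm a x + lm b x) \<and>
     (\<forall>a x y. lm a (x + y) = lm a x + lm a y) \<and>
     (\<forall>c a x. lm (scA c a) x = scX c (lm a x) \<and> lm a (scX c x) = scX c (lm a x)) \<and>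
     (\<forall>a b x. rm x (a + b) = rm x a + rm x b) \<and>
     (\<forall>a x y. rm (x + y) a = rm x a + rm y a) \<and>
     (\<forall>c a x. rm x (scA c a) = scX c (rm x a) \<and> rm (scX c x) a = scX c (rm x a)) \<and>
     (\<exists>K. \<forall>a x. norm (lm a x) \<le> K * norm a * norm x) \<and>
     (\<exists>K. \<forall>a x. norm (rm x a) \<le> K * norm a * norm x) \<and>
     (\<forall>a b x. lm (a * b) x = lm a (lm b x)) \<and>
     (\<forall>a b x. rm x (a * b) = rm (rm x a) b) \<and>
     (\<forall>a b x. lm a (rm x b) = rm (lm a x) b)"

definition bdd_clinear ::
    "(complex \<Rightarrow> 'a::real_normed_vector \<Rightarrow> 'a) \<Rightarrow> (complex \<Rightarrow> 'x::real_normed_vector \<Rightarrow> 'x)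
     \<Rightarrow> ('a \<Rightarrow> 'x) \<Rightarrow> bool" where
  "bdd_clinear scA scX T \<longleftrightarrow>
     (\<forall>a b. T (a + b) = T a + T b) \<and> (\<forall>c a. T (scA c a) = scX c (T a)) \<and>
     (\<exists>K. \<forall>a. norm (T a) \<le> K * norm a)"

definition jordan_derivation ::
    "('a::ring \<Rightarrow> 'x \<Rightarrow> 'x::ab_group_add) \<Rightarrow> ('x \<Rightarrow> 'a \<Rightarrow> 'x) \<Rightarrow> ('a \<Rightarrow> 'x) \<Rightarrow> bool" where
  "jordan_derivation lm rm D \<longleftrightarrow>
     (\<forall>a b. D (a * b + b * a) = rm (D a) b + lm a (D b) + rm (D b) a + lm b (D a))"

definition is_derivation ::
    "('a::ring \<Rightarrow> 'x \<Rightarrow> 'x::ab_group_add) \<Rightarrow> ('x \<Rightarrow> 'a \<Rightarrow> 'x) \<Rightarrow> ('a \<Rightarrow> 'x) \<Rightarrow> bool" where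
  "is_derivation lm rm D \<longleftrightarrow> (\<forall>a b. D (a * b) = rm (D a) b + lm a (D b))"

section \<open>The unitization U# = U \<oplus> C with the l1-norm\<close>

definition unorm :: "'a::real_normed_vector \<times> complex \<Rightarrow> real" where
  "unorm u = norm (fst u) + cmod (snd u)"

definition umult :: "(complex \<Rightarrow> 'a::ring \<Rightarrow> 'a) \<Rightarrow> 'a \<times> complex \<Rightarrow> 'a \<times> complex \<Rightarrow> 'a \<times> complex" where
  "umult sc u v = (fst u * fst v + sc (snd u) (fst v) + sc (snd v) (fst u), snd u * snd v)"

definition uscale :: "(complex \<Rightarrow> 'a \<Rightarrow> 'a) \<Rightarrow> complex \<Rightarrow> 'a \<times> complex \<Rightarrow> 'a \<times> complex" where
  "uscale sc k u = (sc k (fst u), k * snd u)"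

definition uact :: "('a \<Rightarrow> 'x \<Rightarrow> 'x::plus) \<Rightarrow> (complex \<Rightarrow> 'x \<Rightarrow> 'x) \<Rightarrow> 'a \<times> complex \<Rightarrow> 'x \<Rightarrow> 'x" where
  "uact lm scX u x = lm (fst u) x + scX (snd u) x"

definition uract :: "('x \<Rightarrow> 'a \<Rightarrow> 'x::plus) \<Rightarrow> (complex \<Rightarrow> 'x \<Rightarrow> 'x) \<Rightarrow> 'x \<Rightarrow> 'a \<times> complex \<Rightarrow> 'x" where
  "uract rm scX x u = rm x (fst u) + scX (snd u) x"

text \<open>An element of the completed projective tensor product is represented by a sequence
r of pairs (b_n, c_n) with sum of unorm b_n * unorm c_n finite, standing for
sum_n b_n \<otimes> c_n. Two representations denote the same element iff every bounded
complex-bilinear form on U# \<times> U# takes the same value on them (the dual of the projective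
tensor product is the space of bounded bilinear forms).\<close>

type_synonym 'a ptrep = "nat \<Rightarrow> ('a \<times> complex) \<times> ('a \<times> complex)"

definition cbilform :: "(complex \<Rightarrow> 'a::real_normed_vector \<Rightarrow> 'a)
     \<Rightarrow> ('a \<times> complex \<Rightarrow> 'a \<times> complex \<Rightarrow> complex) \<Rightarrow> bool" where
  "cbilform sc \<phi> \<longleftrightarrow>
     (\<forall>u v w. \<phi> (u + v) w = \<phi> u w + \<phi> v w) \<and>
     (\<forall>u v w. \<phi> u (v + w) = \<phi> u v + \<phi> u w) \<and>
     (\<forall>k u v. \<phi> (uscale sc k u) v = k * \<phi> u v \<and> \<phi> u (uscale sc k v) = k * \<phi> u v) \<and>
     (\<exists>K. \<forall>u v. cmod (\<phi> u v) \<le> K * unorm u * unorm v)"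

definition is_ptrep :: "'a::real_normed_vector ptrep \<Rightarrow> bool" where
  "is_ptrep r \<longleftrightarrow> summable (\<lambda>n. unorm (fst (r n)) * unorm (snd (r n)))"

definition ptequiv :: "(complex \<Rightarrow> 'a::real_normed_vector \<Rightarrow> 'a) \<Rightarrow> 'a ptrep \<Rightarrow> 'a ptrep \<Rightarrow> bool" where
  "ptequiv sc r s \<longleftrightarrow> (\<forall>\<phi>. cbilform sc \<phi> \<longrightarrow>
      (\<Sum>n. \<phi> (fst (r n)) (snd (r n))) = (\<Sum>n. \<phi> (fst (s n)) (snd (s n))))"

definition ptnorm :: "(complex \<Rightarrow> 'a::real_normed_vector \<Rightarrow> 'a) \<Rightarrow> 'a ptrep \<Rightarrow> real" where
  "ptnorm sc r = Inf {(\<Sum>n. unorm (fst (s n)) * unorm (snd (s n))) | s. is_ptrep s \<and> ptequiv sc r s}"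

definition ptflip :: "'a ptrep \<Rightarrow> 'a ptrep" where
  "ptflip r = (\<lambda>n. prod.swap (r n))"

definition ptlmult :: "(complex \<Rightarrow> 'a::ring \<Rightarrow> 'a) \<Rightarrow> 'a \<times> complex \<Rightarrow> 'a ptrep \<Rightarrow> 'a ptrep" where
  "ptlmult sc u r = (\<lambda>n. (umult sc u (fst (r n)), snd (r n)))"

definition ptrmult :: "(complex \<Rightarrow> 'a::ring \<Rightarrow> 'a) \<Rightarrow> 'a ptrep \<Rightarrow> 'a \<times> complex \<Rightarrow> 'a ptrep" where
  "ptrmult sc r u = (\<lambda>n. (fst (r n), umult sc (snd (r n)) u))"

definition ptdiff :: "'a::ab_group_add ptrep \<Rightarrow> 'a ptrep \<Rightarrow> 'a ptrep" where
  "ptdiff r s = (\<lambda>n. if even n then r (n div 2) else (- fst (s (n div 2)), snd (s (n div 2))))"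

definition ptpi :: "(complex \<Rightarrow> 'a::{real_normed_algebra,banach} \<Rightarrow> 'a) \<Rightarrow> 'a ptrep \<Rightarrow> 'a \<times> complex" where
  "ptpi sc r = (\<Sum>n. umult sc (fst (r n)) (snd (r n)))"

text \<open>psi_x (a \<otimes> b) = a x b  and  Phi_T (a \<otimes> b) = a T(b), with T(1) = 0\<close>

definition ppsi :: "('a \<Rightarrow> 'x \<Rightarrow> 'x::banach) \<Rightarrow> ('x \<Rightarrow> 'a \<Rightarrow> 'x) \<Rightarrow> (complex \<Rightarrow> 'x \<Rightarrow> 'x)
     \<Rightarrow> 'x \<Rightarrow> 'a ptrep \<Rightarrow> 'x" where
  "ppsi lm rm scX x r = (\<Sum>n. uract rm scX (uact lm scX (fst (r n)) x) (snd (r n)))"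

definition pPhi :: "('a \<Rightarrow> 'x \<Rightarrow> 'x::banach) \<Rightarrow> (complex \<Rightarrow> 'x \<Rightarrow> 'x)
     \<Rightarrow> ('a \<Rightarrow> 'x) \<Rightarrow> 'a ptrep \<Rightarrow> 'x" where
  "pPhi lm scX T r = (\<Sum>n. uact lm scX (fst (r n)) (T (fst (snd (r n)))))"

definition directed_set :: "'l set \<Rightarrow> ('l \<Rightarrow> 'l \<Rightarrow> bool) \<Rightarrow> bool" where
  "directed_set \<Lambda> le \<longleftrightarrow> \<Lambda> \<noteq> {} \<and> (\<forall>i\<in>\<Lambda>. le i i) \<and>
     (\<forall>i\<in>\<Lambda>. \<forall>j\<in>\<Lambda>. \<forall>k\<in>\<Lambda>. le i j \<longrightarrow> le j k \<longrightarrow> le i k) \<and>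
     (\<forall>i\<in>\<Lambda>. \<forall>j\<in>\<Lambda>. \<exists>k\<in>\<Lambda>. le i k \<and> le j k)"

definition net_to_0 :: "'l set \<Rightarrow> ('l \<Rightarrow> 'l \<Rightarrow> bool) \<Rightarrow> ('l \<Rightarrow> real) \<Rightarrow> bool" where
  "net_to_0 \<Lambda> le f \<longleftrightarrow> (\<forall>e>0. \<exists>i0\<in>\<Lambda>. \<forall>i\<in>\<Lambda>. le i0 i \<longrightarrow> \<bar>f i\<bar> < e)"

definition net_bounded :: "'l set \<Rightarrow> ('l \<Rightarrow> 'x::real_normed_vector) \<Rightarrow> bool" where
  "net_bounded \<Lambda> y \<longleftrightarrow> (\<exists>B. \<forall>i\<in>\<Lambda>. norm (y i) \<le> B)"

definition sym_approx_diagonal ::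
    "(complex \<Rightarrow> 'a::{real_normed_algebra,banach} \<Rightarrow> 'a) \<Rightarrow> 'l set \<Rightarrow> ('l \<Rightarrow> 'l \<Rightarrow> bool)
     \<Rightarrow> ('l \<Rightarrow> 'a ptrep) \<Rightarrow> bool" where
  "sym_approx_diagonal sc \<Lambda> le t \<longleftrightarrow> directed_set \<Lambda> le \<and>
     (\<forall>i\<in>\<Lambda>. is_ptrep (t i) \<and> ptequiv sc (ptflip (t i)) (t i)) \<and>
     (\<forall>u. net_to_0 \<Lambda> le (\<lambda>i. ptnorm sc (ptdiff (ptlmult sc u (t i)) (ptrmult sc (t i) u)))) \<and>
     (\<forall>u. net_to_0 \<Lambda> le (\<lambda>i. unorm (umult sc (ptpi sc (t i)) u - u)))"

end

theory Submission
  imports Defs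
begin

(* Let \<psi>_i x = \<psi>_x(t_i), \<xi>_i = \<Phi>_D(t_i) and \<Delta>(a,b) = D(ab) - D(a)b - aD(b); for a Jordan
   derivation \<Delta> is antisymmetric. Since t_i is an approximate diagonal, a \<psi>_i x - \<psi>_i x a \<rightarrow> 0,
   \<psi>_i (x a - a x) \<rightarrow> 0 and \<pi>(t_i) x \<rightarrow> x; together with the symmetry of t_i this gives
   D a + \<psi>_i (D a) - (a \<xi>_i - \<xi>_i a) \<rightarrow> 0. Inserting this into 2\<Delta>(a,b) = \<Delta>(a,b) - \<Delta>(b,a) yields
   \<Delta> + \<psi>_i \<Delta> \<rightarrow> 0. Hence \<Delta> commutes with U, so \<psi>_i \<Delta> = \<pi>(t_i) \<Delta> \<rightarrow> \<Delta> and 2\<Delta> \<rightarrow> 0.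
   Only norm limits along the net occur.

   Tensors are absolutely summable representations, identified when all scalar bounded bilinear
   forms agree on them; the Hahn-Banach theorem transfers this to X-valued
   bilinear maps. *)

section \<open>The Hahn-Banach theorem for real normed spaces\<close>

(* G is the graph of a real-linear functional on a subspace through z that is dominated by the
   norm and equals norm z at z; single-valuedness follows from the domination. *)
definition norming_graph :: "'x::real_normed_vector \<Rightarrow> ('x \<times> real) set \<Rightarrow> bool" where
  "norming_graph z G \<longleftrightarrow> (z, norm z) \<in> G \<and>
     (\<forall>x a y b. (x, a) \<in> G \<longrightarrow> (y, b) \<in> G \<longrightarrow> (x + y, a + b) \<in> G) \<and>
     (\<forall>x a c. (x, a) \<in> G \<longrightarrow> (c *\<^sub>R x, c * a) \<in> G) \<and>
     (\<forall>x a. (x, a) \<in> G \<longrightarrow> a \<le> norm x)"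

lemma norming_graph_single_valued:
  assumes G: "norming_graph z G" and "(x, a) \<in> G" "(x, b) \<in> G"
  shows "a = b"
proof -
  have "(x + (-1) *\<^sub>R x, a + (-1) * b) \<in> G" using assms unfolding norming_graph_def by blast
  then have "a - b \<le> 0" using G unfolding norming_graph_def by fastforce
  moreover have "(x + (-1) *\<^sub>R x, b + (-1) * a) \<in> G" using assms unfolding norming_graph_def by blast
  then have "b - a \<le> 0" using G unfolding norming_graph_def by fastforce
  ultimately show ?thesis by simp
qed

lemma norming_graph_zero:
  assumes "norming_graph z G"
  shows "(0, 0) \<in> G"
  using assms unfolding norming_graph_def by (metis mult_zero_left scale_zero_left)

lemma norming_graph_extension_bound_pos:
  assumes G: "norming_graph z G"
    and above: "\<And>x a. (x, a) \<in> G \<Longrightarrow> c \<le> norm (x + y) - a"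
    and xa: "(x, a) \<in> G" and s: "s > 0"
  shows "a + s * c \<le> norm (x + s *\<^sub>R y)"
proof -
  have "((1/s) *\<^sub>R x, (1/s) * a) \<in> G" using G xa unfolding norming_graph_def by blast
  then have "s * c \<le> s * (norm ((1/s) *\<^sub>R x + y) - (1/s) * a)"
    using above s by simp
  also have "\<dots> = norm (s *\<^sub>R ((1/s) *\<^sub>R x + y)) - a" using s by (simp add: right_diff_distrib)
  also have "s *\<^sub>R ((1/s) *\<^sub>R x + y) = x + s *\<^sub>R y" using s by (simp add: scaleR_add_right)
  finally show ?thesis by simp
qed

(* The case s < 0 is the case s > 0 for the direction -y with value -c. *)
lemma norming_graph_extension_bound:
  assumes G: "norming_graph z G"
    and below: "\<And>x a. (x, a) \<in> G \<Longrightarrow> a - norm (x - y) \<le> c"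
    and above: "\<And>x a. (x, a) \<in> G \<Longrightarrow> c \<le> norm (x + y) - a"
    and xa: "(x, a) \<in> G"
  shows "a + s * c \<le> norm (x + s *\<^sub>R y)"
proof (cases s "0::real" rule: linorder_cases)
  case less
  have "- c \<le> norm (x' + - y) - a'" if "(x', a') \<in> G" for x' a'
    using below[OF that] by simp
  from norming_graph_extension_bound_pos[OF G this xa, of "- s"] less show ?thesis by simp
next
  case equal
  then show ?thesis using G xa unfolding norming_graph_def by auto
next
  case greater
  then show ?thesis using norming_graph_extension_bound_pos[OF G above xa] by blast
qed

lemma norming_graph_extend:
  assumes G: "norming_graph z G" and y: "\<forall>a. (y, a) \<notin> G"
  obtains G' where "norming_graph z G'" "G \<subset> G'"
proof -
  let ?L = "{a - norm (x - y) | x a. (x, a) \<in> G}"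
  have upper: "l \<le> norm (x' + y) - a'" if "l \<in> ?L" "(x', a') \<in> G" for l x' a'
  proof -
    obtain x a where l: "l = a - norm (x - y)" "(x, a) \<in> G" using \<open>l \<in> ?L\<close> by blast
    have "a + a' \<le> norm (x + x')"
      using G l(2) that(2) unfolding norming_graph_def by blast
    also have "\<dots> \<le> norm (x - y) + norm (x' + y)"
      using norm_triangle_ineq[of "x - y" "x' + y"] by simp
    finally show ?thesis using l by simp
  qed
  have "?L \<noteq> {}" using norming_graph_zero[OF G] by blast
  define c where "c = Sup ?L"
  have "bdd_above ?L"
    using upper norming_graph_zero[OF G] unfolding bdd_above_def by blast
  then have below: "a - norm (x - y) \<le> c" if "(x, a) \<in> G" for x a
    unfolding c_def using that by (intro cSup_upper) auto
  have above: "c \<le> norm (x' + y) - a'" if "(x', a') \<in> G" for x' a'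
    unfolding c_def using \<open>?L \<noteq> {}\<close> that upper by (intro cSup_least) auto
  define G' where "G' = {(x + s *\<^sub>R y, a + s * c) | x a s. (x, a) \<in> G}"
  have "G \<subseteq> G'" unfolding G'_def by force
  moreover have "(y, c) \<in> G'"
    unfolding G'_def using norming_graph_zero[OF G] by force
  moreover have "norming_graph z G'"
    unfolding norming_graph_def
  proof (intro conjI allI impI)
    show "(z, norm z) \<in> G'" using \<open>G \<subseteq> G'\<close> G unfolding norming_graph_def by blast
  next
    fix x a x' a' assume "(x, a) \<in> G'" "(x', a') \<in> G'"
    then obtain x1 a1 s1 x2 a2 s2 where
      "x = x1 + s1 *\<^sub>R y" "a = a1 + s1 * c" "(x1, a1) \<in> G"
      "x' = x2 + s2 *\<^sub>R y" "a' = a2 + s2 * c" "(x2, a2) \<in> G"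
      unfolding G'_def by blast
    moreover have "(x1 + x2, a1 + a2) \<in> G" using G calculation unfolding norming_graph_def by blast
    ultimately show "(x + x', a + a') \<in> G'"
      unfolding G'_def by (intro CollectI exI[of _ "x1 + x2"] exI[of _ "a1 + a2"] exI[of _ "s1 + s2"])
        (simp add: algebra_simps)
  next
    fix x a k assume "(x, a) \<in> G'"
    then obtain x1 a1 s1 where "x = x1 + s1 *\<^sub>R y" "a = a1 + s1 * c" "(x1, a1) \<in> G"
      unfolding G'_def by blast
    moreover have "(k *\<^sub>R x1, k * a1) \<in> G" using G calculation unfolding norming_graph_def by blast
    ultimately show "(k *\<^sub>R x, k * a) \<in> G'"
      unfolding G'_def by (intro CollectI exI[of _ "k *\<^sub>R x1"] exI[of _ "k * a1"] exI[of _ "k * s1"])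
        (simp add: algebra_simps)
  next
    fix x a assume "(x, a) \<in> G'"
    then obtain x1 a1 s1 where "x = x1 + s1 *\<^sub>R y" "a = a1 + s1 * c" "(x1, a1) \<in> G"
      unfolding G'_def by blast
    then show "a \<le> norm x" using norming_graph_extension_bound[OF G below above] by simp
  qed
  ultimately show ?thesis using that y by blast
qed

lemma norming_graph_Union_chain:
  assumes "C \<in> chains {G. norming_graph z G}" "C \<noteq> {}"
  shows "norming_graph z (\<Union>C)"
proof -
  have graphs: "\<And>G. G \<in> C \<Longrightarrow> norming_graph z G"
    and chain: "\<And>G H. G \<in> C \<Longrightarrow> H \<in> C \<Longrightarrow> G \<subseteq> H \<or> H \<subseteq> G"
    using assms(1) unfolding chains_def chain_subset_def by blast+
  show ?thesis
    unfolding norming_graph_def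
  proof (intro conjI allI impI)
    show "(z, norm z) \<in> \<Union>C" using assms(2) graphs unfolding norming_graph_def by blast
  next
    fix x a y b assume "(x, a) \<in> \<Union>C" "(y, b) \<in> \<Union>C"
    then obtain G H where "G \<in> C" "H \<in> C" "(x, a) \<in> G" "(y, b) \<in> H" by blast
    from chain[OF \<open>G \<in> C\<close> \<open>H \<in> C\<close>] show "(x + y, a + b) \<in> \<Union>C"
    proof
      assume "G \<subseteq> H"
      then show ?thesis using \<open>H \<in> C\<close> graphs[of H] \<open>(x, a) \<in> G\<close> \<open>(y, b) \<in> H\<close>
        unfolding norming_graph_def by blast
    next
      assume "H \<subseteq> G"
      then show ?thesis using \<open>G \<in> C\<close> graphs[of G] \<open>(x, a) \<in> G\<close> \<open>(y, b) \<in> H\<close>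
        unfolding norming_graph_def by blast
    qed
  next
    fix x a k assume "(x, a) \<in> \<Union>C"
    then show "(k *\<^sub>R x, k * a) \<in> \<Union>C" using graphs unfolding norming_graph_def by blast
  next
    fix x a assume "(x, a) \<in> \<Union>C"
    then show "a \<le> norm x" using graphs unfolding norming_graph_def by blast
  qed
qed

theorem Hahn_Banach_norming_functional:
  fixes z :: "'x::real_normed_vector"
  obtains f :: "'x \<Rightarrow> real" where "bounded_linear f" "\<And>x. \<bar>f x\<bar> \<le> norm x" "f z = norm z"
proof -
  define S where "S = {(s *\<^sub>R z, s * norm z) | s. True}"
  have "norming_graph z S"
    unfolding norming_graph_def
  proof (intro conjI allI impI)
    show "(z, norm z) \<in> S" unfolding S_def by (auto intro!: exI[of _ 1])
  next
    fix x a y b assume "(x, a) \<in> S" "(y, b) \<in> S"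
    then obtain s1 s2 where "x = s1 *\<^sub>R z" "a = s1 * norm z" "y = s2 *\<^sub>R z" "b = s2 * norm z"
      unfolding S_def by blast
    then show "(x + y, a + b) \<in> S"
      unfolding S_def by (intro CollectI exI[of _ "s1 + s2"]) (simp add: algebra_simps)
  next
    fix x a k assume "(x, a) \<in> S"
    then obtain s1 where "x = s1 *\<^sub>R z" "a = s1 * norm z" unfolding S_def by blast
    then show "(k *\<^sub>R x, k * a) \<in> S"
      unfolding S_def by (intro CollectI exI[of _ "k * s1"]) (simp add: algebra_simps)
  next
    fix x a assume "(x, a) \<in> S"
    then obtain s1 where "x = s1 *\<^sub>R z" "a = s1 * norm z" unfolding S_def by blast
    then show "a \<le> norm x" by (simp add: abs_ge_self mult_right_mono)
  qed
  have "\<forall>C\<in>chains {G. norming_graph z G}. \<exists>U\<in>{G. norming_graph z G}. \<forall>X\<in>C. X \<subseteq> U"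
  proof
    fix C assume C: "C \<in> chains {G. norming_graph z G}"
    show "\<exists>U\<in>{G. norming_graph z G}. \<forall>X\<in>C. X \<subseteq> U"
    proof (cases "C = {}")
      case True
      then show ?thesis using \<open>norming_graph z S\<close> by blast
    next
      case False
      then show ?thesis using norming_graph_Union_chain[OF C False] by blast
    qed
  qed
  from Zorn_Lemma2[OF this] obtain M where M: "norming_graph z M"
    and maximal: "\<And>G. norming_graph z G \<Longrightarrow> M \<subseteq> G \<Longrightarrow> G = M"
    by blast
  have "\<forall>x. \<exists>a. (x, a) \<in> M"
    using norming_graph_extend[OF M] maximal by blast
  then obtain f where f: "\<And>x. (x, f x) \<in> M" by (metis choice)
  have f_eq: "f x = a" if "(x, a) \<in> M" for x a
    using norming_graph_single_valued[OF M f that] .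
  have add: "f (x + y) = f x + f y" for x y
    using M f unfolding norming_graph_def by (intro f_eq) blast
  have scale: "f (c *\<^sub>R x) = c * f x" for c x
    using M f unfolding norming_graph_def by (intro f_eq) blast
  have upper: "f x \<le> norm x" for x
    using M f unfolding norming_graph_def by blast
  have "\<bar>f x\<bar> \<le> norm x" for x
    using upper[of x] upper[of "-x"] scale[of "-1" x] by simp
  moreover from this have "bounded_linear f"
    by (intro bounded_linear_intro[of f 1]) (use add scale in auto)
  moreover have "f z = norm z" using f_eq M unfolding norming_graph_def by blast
  ultimately show ?thesis using that by blast
qed

locale complex_scaling =
  fixes sc :: "complex \<Rightarrow> 'v::banach \<Rightarrow> 'v"
  assumes complex_banach_space: "complex_banach_space sc"
begin

lemma of_real [simp]: "sc (of_real r) x = r *\<^sub>R x"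
  and add_scalar: "sc (c + d) x = sc c x + sc d x"
  and add [simp]: "sc c (x + y) = sc c x + sc c y"
  and mult_scalar: "sc (c * d) x = sc c (sc d x)"
  and norm_sc: "norm (sc c x) = cmod c * norm x"
  using complex_banach_space unfolding complex_banach_space_def by blast+

lemma zero_scalar [simp]: "sc 0 x = 0" and one_scalar [simp]: "sc 1 x = x"
  using of_real[of 0 x] of_real[of 1 x] by simp_all

lemma bounded_linear_sc: "bounded_linear (sc c)"
proof (rule bounded_linear_intro[of _ "cmod c"])
  show "sc c (r *\<^sub>R x) = r *\<^sub>R sc c x" for r x
    by (metis mult_scalar of_real mult.commute)
qed (simp_all add: norm_sc mult.commute)

lemma zero [simp]: "sc c 0 = 0"
  and minus [simp]: "sc c (- x) = - sc c x"
  and diff [simp]: "sc c (x - y) = sc c x - sc c y"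
  and scaleR [simp]: "sc c (r *\<^sub>R x) = r *\<^sub>R sc c x"
  using bounded_linear_sc[of c] by (simp_all add: linear_simps)

lemma exists_complex_functional:
  assumes "z \<noteq> 0"
  obtains g :: "'v \<Rightarrow> complex"
  where "bounded_linear g" "\<And>k x. g (sc k x) = k * g x" "g z \<noteq> 0"
proof -
  obtain f :: "'v \<Rightarrow> real" where f: "bounded_linear f" "f z = norm z"
    using Hahn_Banach_norming_functional by metis
  interpret f: bounded_linear f by (fact f(1))
  define g where "g x = complex_of_real (f x) - \<i> * complex_of_real (f (sc \<i> x))" for x
  have "bounded_linear (\<lambda>x. complex_of_real (f (sc \<i> x)))"
    by (intro bounded_linear_compose[OF bounded_linear_of_real]
        bounded_linear_compose[OF f(1) bounded_linear_sc])
  then have "bounded_linear g"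
    unfolding g_def by (intro bounded_linear_sub bounded_linear_compose[OF bounded_linear_mult_right]
        bounded_linear_compose[OF bounded_linear_of_real f(1)])
  moreover have "g (sc k x) = k * g x" for k x
  proof -
    have split_k: "sc k x = Re k *\<^sub>R x + Im k *\<^sub>R sc \<i> x"
      by (subst complex_eq[of k]) (simp only: add_scalar mult_scalar of_real scaleR)
    have ii: "sc \<i> (sc \<i> x) = - x"
      using mult_scalar[of \<i> \<i> x, symmetric] of_real[of "-1" x] by simp
    then have "sc \<i> (sc k x) = Re k *\<^sub>R sc \<i> x - Im k *\<^sub>R x"
      unfolding split_k by simp
    then show ?thesis
      unfolding g_def split_k
      by (simp add: ii f.add f.scaleR f.diff f.neg complex_eq_iff algebra_simps)
  qed
  moreover have "g z \<noteq> 0" using f(2) assms unfolding g_def by (auto simp: complex_eq_iff)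
  ultimately show ?thesis using that by blast
qed

end

section \<open>Representations of tensors and nets\<close>

lemma unorm_Pair: "unorm (a, c) = norm a + cmod c"
  by (simp add: unorm_def)

lemma unorm_nonneg: "unorm p \<ge> 0"
  by (simp add: unorm_def)

lemma norm_le_unorm: "norm p \<le> unorm p"
  by (cases p) (simp add: unorm_Pair norm_Pair_le)

lemma unorm_le_norm: "unorm p \<le> 2 * norm p"
  using norm_fst_le[of "fst p" "snd p"] norm_snd_le[of "snd p" "fst p"] by (simp add: unorm_def)

lemma unorm_minus [simp]: "unorm (- p) = unorm p"
  by (simp add: unorm_def)

lemma sums_interleave:
  fixes f g :: "nat \<Rightarrow> 'b::real_normed_vector"
  assumes "f sums a" "g sums b"
  shows "(\<lambda>n. if even n then f (n div 2) else g (n div 2)) sums (a + b)"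
proof -
  define f' where "f' n = (if even n then f (n div 2) else 0)" for n
  define g' where "g' n = (if even n then 0 else g (n div 2))" for n
  have "(\<lambda>n. f' (2 * n)) sums a" "strict_mono (\<lambda>n::nat. 2 * n)"
    "\<And>n. n \<notin> range (\<lambda>n::nat. 2 * n) \<Longrightarrow> f' n = 0"
    unfolding f'_def using assms(1) by (auto simp: strict_mono_def elim!: evenE)
  then have "f' sums a" using sums_mono_reindex by blast
  moreover have "(\<lambda>n. g' (2 * n + 1)) sums b" "strict_mono (\<lambda>n::nat. 2 * n + 1)"
    "\<And>n. n \<notin> range (\<lambda>n::nat. 2 * n + 1) \<Longrightarrow> g' n = 0"
    unfolding g'_def using assms(2) by (auto simp: strict_mono_def elim!: oddE)
  then have "g' sums b" using sums_mono_reindex by blast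
  ultimately have "(\<lambda>n. f' n + g' n) sums (a + b)" by (rule sums_add)
  moreover have "(\<lambda>n. f' n + g' n) = (\<lambda>n. if even n then f (n div 2) else g (n div 2))"
    unfolding f'_def g'_def by auto
  ultimately show ?thesis by simp
qed

lemma is_ptrep_ptflip: "is_ptrep r \<Longrightarrow> is_ptrep (ptflip r)"
  unfolding is_ptrep_def ptflip_def by (simp add: mult.commute)

lemma is_ptrep_ptdiff:
  assumes "is_ptrep r" "is_ptrep s"
  shows "is_ptrep (ptdiff r s)"
proof -
  have "(\<lambda>n. if even n then unorm (fst (r (n div 2))) * unorm (snd (r (n div 2)))
      else unorm (fst (s (n div 2))) * unorm (snd (s (n div 2)))) sums
      ((\<Sum>n. unorm (fst (r n)) * unorm (snd (r n))) + (\<Sum>n. unorm (fst (s n)) * unorm (snd (s n))))"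
    using assms unfolding is_ptrep_def by (intro sums_interleave) (auto simp: summable_sums)
  then show ?thesis
    unfolding is_ptrep_def by (rule sums_summable[THEN summable_cong[THEN iffD1, rotated]])
      (simp add: ptdiff_def)
qed

lemma directed_setD:
  assumes "directed_set \<Lambda> le"
  shows "\<Lambda> \<noteq> {}" "\<And>i. i \<in> \<Lambda> \<Longrightarrow> le i i"
    "\<And>i j k. i \<in> \<Lambda> \<Longrightarrow> j \<in> \<Lambda> \<Longrightarrow> k \<in> \<Lambda> \<Longrightarrow> le i j \<Longrightarrow> le j k \<Longrightarrow> le i k"
    "\<And>i j. i \<in> \<Lambda> \<Longrightarrow> j \<in> \<Lambda> \<Longrightarrow> \<exists>k\<in>\<Lambda>. le i k \<and> le j k"
  using assms unfolding directed_set_def by blast+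

definition net_filter :: "'l set \<Rightarrow> ('l \<Rightarrow> 'l \<Rightarrow> bool) \<Rightarrow> 'l filter" where
  "net_filter \<Lambda> le = (INF i\<in>\<Lambda>. principal {j\<in>\<Lambda>. le i j})"

lemma eventually_net_filter:
  assumes dir: "directed_set \<Lambda> le"
  shows "eventually P (net_filter \<Lambda> le) \<longleftrightarrow> (\<exists>i\<in>\<Lambda>. \<forall>j\<in>\<Lambda>. le i j \<longrightarrow> P j)"
proof -
  have base: "\<exists>k\<in>\<Lambda>. principal {j\<in>\<Lambda>. le k j} \<le>
      inf (principal {j\<in>\<Lambda>. le i1 j}) (principal {j\<in>\<Lambda>. le i2 j})"
    if i: "i1 \<in> \<Lambda>" "i2 \<in> \<Lambda>" for i1 i2
  proof -
    obtain k where k: "k \<in> \<Lambda>" "le i1 k" "le i2 k"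
      using directed_setD(4)[OF dir i] by blast
    have "{j\<in>\<Lambda>. le k j} \<subseteq> {j\<in>\<Lambda>. le i1 j} \<inter> {j\<in>\<Lambda>. le i2 j}"
      using directed_setD(3)[OF dir] k i by blast
    with k(1) show ?thesis by (intro bexI[of _ k]) simp_all
  qed
  have "eventually P (net_filter \<Lambda> le) \<longleftrightarrow> (\<exists>i\<in>\<Lambda>. eventually P (principal {j\<in>\<Lambda>. le i j}))"
    unfolding net_filter_def by (rule eventually_INF_base[OF directed_setD(1)[OF dir] base])
  then show ?thesis by (auto simp: eventually_principal)
qed

lemma net_filter_nontrivial:
  assumes "directed_set \<Lambda> le"
  shows "\<not> trivial_limit (net_filter \<Lambda> le)"
proof -
  have "\<not> eventually (\<lambda>_. False) (net_filter \<Lambda> le)"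
    unfolding eventually_net_filter[OF assms] using directed_setD(2)[OF assms] by blast
  then show ?thesis by (simp add: trivial_limit_def)
qed

lemma eventually_in_net_filter:
  assumes "directed_set \<Lambda> le"
  shows "eventually (\<lambda>i. i \<in> \<Lambda>) (net_filter \<Lambda> le)"
  unfolding eventually_net_filter[OF assms] using directed_setD(1)[OF assms] by blast

lemma net_to_0_iff_tendsto:
  assumes "directed_set \<Lambda> le"
  shows "net_to_0 \<Lambda> le f \<longleftrightarrow> (f \<longlongrightarrow> 0) (net_filter \<Lambda> le)"
  unfolding net_to_0_def tendsto_iff eventually_net_filter[OF assms] by (simp add: dist_real_def)

lemma tendsto_diff_zero:
  fixes f g :: "'i \<Rightarrow> 'b::real_normed_vector"
  shows "(f \<longlongrightarrow> 0) F \<Longrightarrow> (g \<longlongrightarrow> 0) F \<Longrightarrow> ((\<lambda>x. f x - g x) \<longlongrightarrow> 0) F"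
  using tendsto_diff[of f 0 F g 0] by simp

section \<open>The unitization and its actions\<close>

locale unitized_bimodule =
  fixes scA :: "complex \<Rightarrow> 'a::{real_normed_algebra,banach} \<Rightarrow> 'a"
    and scX :: "complex \<Rightarrow> 'x::banach \<Rightarrow> 'x"
    and lm :: "'a \<Rightarrow> 'x \<Rightarrow> 'x" and rm :: "'x \<Rightarrow> 'a \<Rightarrow> 'x"
  assumes algebra: "complex_banach_algebra scA"
    and space: "complex_banach_space scX"
    and bimodule: "banach_bimodule scA scX lm rm"
begin

sublocale A: complex_scaling scA
  using algebra unfolding complex_banach_algebra_def by unfold_locales blast

sublocale X: complex_scaling scX
  by (fact complex_scaling.intro[OF space])

lemma scA_mult_left [simp]: "scA c a * b = scA c (a * b)"
  and scA_mult_right [simp]: "a * scA c b = scA c (a * b)"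
  using algebra unfolding complex_banach_algebra_def by metis+

lemma lm_scA [simp]: "lm (scA c a) x = scX c (lm a x)"
  and lm_scX [simp]: "lm a (scX c x) = scX c (lm a x)"
  and rm_scA [simp]: "rm x (scA c a) = scX c (rm x a)"
  and rm_scX [simp]: "rm (scX c x) a = scX c (rm x a)"
  and lm_mult [simp]: "lm (a * b) x = lm a (lm b x)"
  and rm_mult [simp]: "rm x (a * b) = rm (rm x a) b"
  and lm_rm [simp]: "lm a (rm x b) = rm (lm a x) b"
  using bimodule by (simp_all add: banach_bimodule_def)

sublocale lm: bounded_bilinear lm
proof
  show "lm (a + a') x = lm a x + lm a' x" "lm a (x + x') = lm a x + lm a x'" for a a' x x'
    using bimodule by (simp_all add: banach_bimodule_def)
  show "lm (r *\<^sub>R a) x = r *\<^sub>R lm a x" "lm a (r *\<^sub>R x) = r *\<^sub>R lm a x" for r a x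
    by (metis lm_scA lm_scX A.of_real X.of_real)+
  obtain K where "\<forall>a x. norm (lm a x) \<le> K * norm a * norm x"
    using bimodule unfolding banach_bimodule_def by (elim conjE) blast
  then show "\<exists>K. \<forall>a x. norm (lm a x) \<le> norm a * norm x * K"
    by (metis mult.commute mult.left_commute)
qed

sublocale rm: bounded_bilinear rm
proof
  show "rm (x + x') a = rm x a + rm x' a" "rm x (a + a') = rm x a + rm x a'" for a a' x x'
    using bimodule by (simp_all add: banach_bimodule_def)
  show "rm (r *\<^sub>R x) a = r *\<^sub>R rm x a" "rm x (r *\<^sub>R a) = r *\<^sub>R rm x a" for r a x
    by (metis rm_scA rm_scX A.of_real X.of_real)+
  obtain K where "\<forall>a x. norm (rm x a) \<le> K * norm a * norm x"
    using bimodule unfolding banach_bimodule_def by (elim conjE) blast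
  then show "\<exists>K. \<forall>x a. norm (rm x a) \<le> norm x * norm a * K"
    by (metis mult.commute mult.left_commute)
qed

lemmas bimodule_simps [simp] =
  lm.add_left lm.add_right lm.zero_left lm.zero_right lm.minus_left lm.minus_right
  lm.diff_left lm.diff_right lm.scaleR_left lm.scaleR_right
  rm.add_left rm.add_right rm.zero_left rm.zero_right rm.minus_left rm.minus_right
  rm.diff_left rm.diff_right rm.scaleR_left rm.scaleR_right

abbreviation umul where "umul \<equiv> umult scA"
abbreviation usc where "usc \<equiv> uscale scA"
abbreviation lact where "lact \<equiv> uact lm scX"
abbreviation ract where "ract \<equiv> uract rm scX"

lemma umul_Pair: "umul (a, c) (b, d) = (a * b + scA c b + scA d a, c * d)"
  and usc_Pair: "usc k (a, c) = (scA k a, k * c)"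
  and lact_Pair: "lact (a, c) x = lm a x + scX c x"
  and ract_Pair: "ract x (a, c) = rm x a + scX c x"
  by (simp_all add: umult_def uscale_def uact_def uract_def)

lemma unorm_umul: "unorm (umul p q) \<le> unorm p * unorm q"
proof (cases p; cases q)
  fix a c b d assume pq: "p = (a, c)" "q = (b, d)"
  have "norm (a * b + scA c b + scA d a) \<le> norm (a * b) + norm (scA c b) + norm (scA d a)"
    by (rule order_trans[OF norm_triangle_ineq]) (simp add: norm_triangle_ineq)
  also have "\<dots> \<le> norm a * norm b + cmod c * norm b + cmod d * norm a"
    using norm_mult_ineq[of a b] by (simp add: A.norm_sc)
  finally show ?thesis
    using pq by (simp add: unorm_Pair umul_Pair norm_mult algebra_simps)
qed

sublocale umul: bounded_bilinear umul
proof
  show "umul (p + p') q = umul p q + umul p' q" "umul p (q + q') = umul p q + umul p q'" for p p' q q'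
    by (cases p; cases p'; cases q; cases q'; simp add: umul_Pair A.add_scalar algebra_simps)+
  show "umul (r *\<^sub>R p) q = r *\<^sub>R umul p q" "umul p (r *\<^sub>R q) = r *\<^sub>R umul p q" for r p q
    by (cases p; cases q; simp add: umul_Pair A.mult_scalar scaleR_conv_of_real algebra_simps)+
  have "norm (umul p q) \<le> norm p * norm q * 4" for p q
  proof -
    have "norm (umul p q) \<le> unorm p * unorm q"
      using norm_le_unorm unorm_umul order_trans by blast
    also have "\<dots> \<le> (2 * norm p) * (2 * norm q)"
      by (intro mult_mono unorm_le_norm) (simp_all add: unorm_nonneg)
    finally show ?thesis by simp
  qed
  then show "\<exists>K. \<forall>p q. norm (umul p q) \<le> norm p * norm q * K" by blast
qed

sublocale lact: bounded_bilinear lact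
proof
  show "lact (p + p') x = lact p x + lact p' x" "lact p (x + x') = lact p x + lact p x'" for p p' x x'
    by (cases p; cases p'; simp add: lact_Pair X.add_scalar algebra_simps)+
  show "lact (r *\<^sub>R p) x = r *\<^sub>R lact p x" "lact p (r *\<^sub>R x) = r *\<^sub>R lact p x" for r p x
    by (cases p; simp add: lact_Pair X.mult_scalar scaleR_conv_of_real scaleR_add_right)+
  obtain K where K: "\<forall>a x. norm (lm a x) \<le> norm a * norm x * K" "K > 0"
    using lm.pos_bounded by blast
  have "norm (lact p x) \<le> norm p * norm x * (2 * (K + 1))" for p x
  proof (cases p)
    case (Pair a c)
    have "norm (lact p x) \<le> norm (lm a x) + norm (scX c x)"
      by (simp add: Pair lact_Pair norm_triangle_ineq)
    also have "\<dots> \<le> norm a * norm x * (K + 1) + cmod c * norm x * (K + 1)"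
    proof (rule add_mono)
      have "norm a * norm x * K \<le> norm a * norm x * (K + 1)" by (intro mult_left_mono) auto
      then show "norm (lm a x) \<le> norm a * norm x * (K + 1)" using K(1) by (meson order_trans)
      have "cmod c * norm x * 1 \<le> cmod c * norm x * (K + 1)" using K(2) by (intro mult_left_mono) auto
      then show "norm (scX c x) \<le> cmod c * norm x * (K + 1)" by (simp add: X.norm_sc)
    qed
    also have "\<dots> = unorm p * norm x * (K + 1)" by (simp add: Pair unorm_Pair algebra_simps)
    also have "\<dots> \<le> (2 * norm p) * norm x * (K + 1)"
      using K(2) unorm_le_norm[of p] by (intro mult_right_mono) auto
    finally show ?thesis by (simp add: algebra_simps)
  qed
  then show "\<exists>K. \<forall>p x. norm (lact p x) \<le> norm p * norm x * K" by blast
qed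

sublocale ract: bounded_bilinear ract
proof
  show "ract (x + x') p = ract x p + ract x' p" "ract x (p + p') = ract x p + ract x p'" for p p' x x'
    by (cases p; cases p'; simp add: ract_Pair X.add_scalar algebra_simps)+
  show "ract (r *\<^sub>R x) p = r *\<^sub>R ract x p" "ract x (r *\<^sub>R p) = r *\<^sub>R ract x p" for r p x
    by (cases p; simp add: ract_Pair X.mult_scalar scaleR_conv_of_real scaleR_add_right)+
  obtain K where K: "\<forall>x a. norm (rm x a) \<le> norm x * norm a * K" "K > 0"
    using rm.pos_bounded by blast
  have "norm (ract x p) \<le> norm x * norm p * (2 * (K + 1))" for p x
  proof (cases p)
    case (Pair a c)
    have "norm (ract x p) \<le> norm (rm x a) + norm (scX c x)"
      by (simp add: Pair ract_Pair norm_triangle_ineq)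
    also have "\<dots> \<le> norm x * norm a * (K + 1) + cmod c * norm x * (K + 1)"
    proof (rule add_mono)
      have "norm x * norm a * K \<le> norm x * norm a * (K + 1)" by (intro mult_left_mono) auto
      then show "norm (rm x a) \<le> norm x * norm a * (K + 1)" using K(1) by (meson order_trans)
      have "cmod c * norm x * 1 \<le> cmod c * norm x * (K + 1)" using K(2) by (intro mult_left_mono) auto
      then show "norm (scX c x) \<le> cmod c * norm x * (K + 1)" by (simp add: X.norm_sc)
    qed
    also have "\<dots> = unorm p * norm x * (K + 1)" by (simp add: Pair unorm_Pair algebra_simps)
    also have "\<dots> \<le> (2 * norm p) * norm x * (K + 1)"
      using K(2) unorm_le_norm[of p] by (intro mult_right_mono) auto
    finally show ?thesis by (simp add: algebra_simps)
  qed
  then show "\<exists>K. \<forall>x p. norm (ract x p) \<le> norm x * norm p * K" by blast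
qed

lemma umul_usc_left: "umul (usc k p) q = usc k (umul p q)"
  and umul_usc_right: "umul p (usc k q) = usc k (umul p q)"
  by (cases p; cases q; simp add: umul_Pair usc_Pair A.mult_scalar[symmetric] algebra_simps)+

lemma umul_one_right [simp]: "umul p (0, 1) = p"
  by (cases p) (simp add: umul_Pair)

lemma lact_umul: "lact (umul p q) x = lact p (lact q x)"
  and ract_umul: "ract x (umul p q) = ract (ract x p) q"
  and lact_ract: "lact p (ract x q) = ract (lact p x) q"
  by (cases p; cases q; simp add: lact_Pair ract_Pair umul_Pair X.mult_scalar[symmetric] algebra_simps)+

lemma lact_usc: "lact (usc k p) x = scX k (lact p x)"
  and lact_scX: "lact p (scX k x) = scX k (lact p x)"
  and ract_usc: "ract x (usc k p) = scX k (ract x p)"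
  and ract_scX: "ract (scX k x) p = scX k (ract x p)"
  by (cases p; simp add: lact_Pair ract_Pair usc_Pair X.mult_scalar[symmetric] mult.commute)+

lemma lact_bound:
  obtains K where "K > 0" "\<And>p x. norm (lact p x) \<le> K * unorm p * norm x"
proof -
  obtain K where K: "K > 0" "\<And>p x. norm (lact p x) \<le> norm p * norm x * K"
    using lact.pos_bounded by blast
  have "norm (lact p x) \<le> K * unorm p * norm x" for p x
  proof -
    have "norm p * (norm x * K) \<le> unorm p * (norm x * K)"
      using K(1) by (intro mult_right_mono norm_le_unorm) simp
    then show ?thesis using K(2)[of p x] by (simp add: algebra_simps)
  qed
  with K(1) show ?thesis using that by blast
qed

lemma ract_bound:
  obtains K where "K > 0" "\<And>p x. norm (ract x p) \<le> K * unorm p * norm x"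
proof -
  obtain K where K: "K > 0" "\<And>p x. norm (ract x p) \<le> norm x * norm p * K"
    using ract.pos_bounded by blast
  have "norm (ract x p) \<le> K * unorm p * norm x" for p x
  proof -
    have "norm p * (norm x * K) \<le> unorm p * (norm x * K)"
      using K(1) by (intro mult_right_mono norm_le_unorm) simp
    then show ?thesis using K(2)[of x p] by (simp add: algebra_simps)
  qed
  with K(1) show ?thesis using that by blast
qed

definition inner_derivation :: "'x \<Rightarrow> 'a \<times> complex \<Rightarrow> 'x" where
  "inner_derivation x p = lact p x - ract x p"

lemma inner_derivation_umul:
  "inner_derivation x (umul p q) = ract (inner_derivation x p) q + lact p (inner_derivation x q)"
  by (simp add: inner_derivation_def lact_umul ract_umul lact_ract lact.diff_right ract.diff_left)

lemma bounded_linear_inner_derivation: "bounded_linear (\<lambda>x. inner_derivation x c)"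
  unfolding inner_derivation_def
  by (rule bounded_linear_sub[OF lact.bounded_linear_right ract.bounded_linear_left])

definition ubilinear :: "('a \<times> complex \<Rightarrow> 'a \<times> complex \<Rightarrow> 'x) \<Rightarrow> bool" where
  "ubilinear B \<longleftrightarrow>
     (\<forall>p q r. B (p + q) r = B p r + B q r) \<and> (\<forall>p q r. B p (q + r) = B p q + B p r) \<and>
     (\<forall>k p q. B (usc k p) q = scX k (B p q)) \<and> (\<forall>k p q. B p (usc k q) = scX k (B p q)) \<and>
     (\<exists>K. \<forall>p q. norm (B p q) \<le> K * unorm p * unorm q)"

definition ulinear :: "('a \<times> complex \<Rightarrow> 'x) \<Rightarrow> bool" where
  "ulinear F \<longleftrightarrow> (\<forall>p q. F (p + q) = F p + F q) \<and> (\<forall>k p. F (usc k p) = scX k (F p)) \<and>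
     (\<exists>K. \<forall>p. norm (F p) \<le> K * unorm p)"

definition xlinear :: "('x \<Rightarrow> 'x) \<Rightarrow> bool" where
  "xlinear F \<longleftrightarrow> bounded_linear F \<and> (\<forall>k x. F (scX k x) = scX k (F x))"

lemma ubilinearI:
  assumes "\<And>p q r. B (p + q) r = B p r + B q r" "\<And>p q r. B p (q + r) = B p q + B p r"
    "\<And>k p q. B (usc k p) q = scX k (B p q)" "\<And>k p q. B p (usc k q) = scX k (B p q)"
    "\<And>p q. norm (B p q) \<le> K * unorm p * unorm q"
  shows "ubilinear B"
  unfolding ubilinear_def using assms by blast

lemma ubilinearD:
  assumes "ubilinear B"
  shows "B (p + q) r = B p r + B q r" "B p (q + r) = B p q + B p r"
    "B (usc k p) q = scX k (B p q)" "B p (usc k q) = scX k (B p q)"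
  using assms unfolding ubilinear_def by blast+

lemma ulinearD:
  assumes "ulinear F"
  shows "F (p + q) = F p + F q" "F (usc k p) = scX k (F p)"
  using assms unfolding ulinear_def by blast+

lemma ubilinear_bound:
  assumes "ubilinear B"
  obtains K where "K > 0" "\<And>p q. norm (B p q) \<le> K * unorm p * unorm q"
proof -
  obtain K where K: "\<And>p q. norm (B p q) \<le> K * unorm p * unorm q"
    using assms unfolding ubilinear_def by blast
  have "norm (B p q) \<le> (\<bar>K\<bar> + 1) * unorm p * unorm q" for p q
  proof -
    have "K * unorm p * unorm q \<le> (\<bar>K\<bar> + 1) * unorm p * unorm q"
      by (intro mult_right_mono) (auto simp: unorm_nonneg)
    then show ?thesis using K[of p q] by linarith
  qed
  then show ?thesis using that[of "\<bar>K\<bar> + 1"] by simp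
qed

lemma ubilinear_minus_left:
  assumes "ubilinear B"
  shows "B (- p) q = - B p q"
  using ubilinearD(1)[OF assms, of p "- p" q] ubilinearD(1)[OF assms, of 0 0 q]
  by (simp add: add_eq_0_iff)

lemma ubilinear_add:
  assumes "ubilinear B1" "ubilinear B2"
  shows "ubilinear (\<lambda>p q. B1 p q + B2 p q)"
proof -
  obtain K1 where K1: "\<And>p q. norm (B1 p q) \<le> K1 * unorm p * unorm q"
    using ubilinear_bound[OF assms(1)] by blast
  obtain K2 where K2: "\<And>p q. norm (B2 p q) \<le> K2 * unorm p * unorm q"
    using ubilinear_bound[OF assms(2)] by blast
  show ?thesis
  proof (rule ubilinearI[where K = "K1 + K2"])
    show "norm (B1 p q + B2 p q) \<le> (K1 + K2) * unorm p * unorm q" for p q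
      using norm_triangle_ineq[of "B1 p q" "B2 p q"] K1[of p q] K2[of p q]
      by (simp add: algebra_simps)
  qed (simp_all add: ubilinearD[OF assms(1)] ubilinearD[OF assms(2)] algebra_simps)
qed

lemma ubilinear_compose:
  assumes "xlinear F" "ubilinear B"
  shows "ubilinear (\<lambda>p q. F (B p q))"
proof -
  interpret F: bounded_linear F using assms(1) unfolding xlinear_def by blast
  obtain K1 where K1: "K1 > 0" "\<And>x. norm (F x) \<le> norm x * K1" using F.pos_bounded by blast
  obtain K2 where K2: "\<And>p q. norm (B p q) \<le> K2 * unorm p * unorm q"
    using ubilinear_bound[OF assms(2)] by blast
  show ?thesis
  proof (rule ubilinearI[where K = "K1 * K2"])
    show "norm (F (B p q)) \<le> (K1 * K2) * unorm p * unorm q" for p q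
    proof -
      have "norm (F (B p q)) \<le> K1 * norm (B p q)" using K1(2)[of "B p q"] by (simp add: mult.commute)
      also have "\<dots> \<le> K1 * (K2 * unorm p * unorm q)" using K1(1) K2[of p q] by (intro mult_left_mono) auto
      finally show ?thesis by (simp add: algebra_simps)
    qed
  qed (use assms in \<open>simp_all add: ubilinearD F.add xlinear_def\<close>)
qed

lemma xlinear_uminus: "xlinear uminus"
  unfolding xlinear_def by (simp add: bounded_linear_minus[OF bounded_linear_ident])

lemma xlinear_ract: "xlinear (\<lambda>x. ract x p)"
  unfolding xlinear_def by (simp add: ract.bounded_linear_left ract_scX)

lemma ubilinear_diff:
  assumes "ubilinear B1" "ubilinear B2"
  shows "ubilinear (\<lambda>p q. B1 p q - B2 p q)"
  using ubilinear_add[OF assms(1) ubilinear_compose[OF xlinear_uminus assms(2)]] by simp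

lemma ubilinear_flip:
  assumes "ubilinear B"
  shows "ubilinear (\<lambda>p q. B q p)"
proof -
  obtain K where "\<And>p q. norm (B p q) \<le> K * unorm p * unorm q"
    using ubilinear_bound[OF assms] by blast
  then have "norm (B q p) \<le> K * unorm p * unorm q" for p q
    by (metis mult.commute mult.left_commute)
  then show ?thesis by (intro ubilinearI) (simp_all add: ubilinearD[OF assms])
qed

lemma ubilinear_lmult_fst:
  assumes "ubilinear B"
  shows "ubilinear (\<lambda>p q. B (umul a p) q)"
proof -
  obtain K where K: "K > 0" "\<And>p q. norm (B p q) \<le> K * unorm p * unorm q"
    using ubilinear_bound[OF assms] by blast
  have "norm (B (umul a p) q) \<le> (K * unorm a) * unorm p * unorm q" for p q
  proof -
    have "norm (B (umul a p) q) \<le> K * unorm (umul a p) * unorm q" using K by blast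
    also have "\<dots> \<le> K * (unorm a * unorm p) * unorm q"
      using K(1) unorm_umul[of a p] by (intro mult_right_mono mult_left_mono) (auto simp: unorm_nonneg)
    finally show ?thesis by (simp add: algebra_simps)
  qed
  then show ?thesis
    by (intro ubilinearI) (simp_all add: ubilinearD[OF assms] umul.add_right umul_usc_right)
qed

lemma ubilinear_rmult_fst:
  assumes "ubilinear B"
  shows "ubilinear (\<lambda>p q. B (umul p a) q)"
proof -
  obtain K where K: "K > 0" "\<And>p q. norm (B p q) \<le> K * unorm p * unorm q"
    using ubilinear_bound[OF assms] by blast
  have "norm (B (umul p a) q) \<le> (K * unorm a) * unorm p * unorm q" for p q
  proof -
    have "norm (B (umul p a) q) \<le> K * unorm (umul p a) * unorm q" using K by blast
    also have "\<dots> \<le> K * (unorm p * unorm a) * unorm q"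
      using K(1) unorm_umul[of p a] by (intro mult_right_mono mult_left_mono) (auto simp: unorm_nonneg)
    finally show ?thesis by (simp add: algebra_simps)
  qed
  then show ?thesis
    by (intro ubilinearI) (simp_all add: ubilinearD[OF assms] umul.add_left umul_usc_left)
qed

lemma ubilinear_rmult_snd:
  assumes "ubilinear B"
  shows "ubilinear (\<lambda>p q. B p (umul q a))"
  using ubilinear_flip[OF ubilinear_rmult_fst[OF ubilinear_flip[OF assms]]] .

lemma ubilinear_lmult_snd:
  assumes "ubilinear B"
  shows "ubilinear (\<lambda>p q. B p (umul a q))"
  using ubilinear_flip[OF ubilinear_lmult_fst[OF ubilinear_flip[OF assms]]] .

lemma ubilinear_lact:
  assumes "ulinear F"
  shows "ubilinear (\<lambda>p q. lact p (F q))"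
proof -
  obtain K1 where K1: "K1 > 0" "\<And>p x. norm (lact p x) \<le> K1 * unorm p * norm x"
    using lact_bound by blast
  obtain K2 where K2: "\<And>q. norm (F q) \<le> K2 * unorm q"
    using assms unfolding ulinear_def by blast
  have "norm (lact p (F q)) \<le> (K1 * K2) * unorm p * unorm q" for p q
  proof -
    have "norm (lact p (F q)) \<le> K1 * unorm p * norm (F q)" using K1 by blast
    also have "\<dots> \<le> K1 * unorm p * (K2 * unorm q)"
      using K1(1) K2[of q] by (intro mult_left_mono) (auto simp: unorm_nonneg)
    finally show ?thesis by (simp add: algebra_simps)
  qed
  then show ?thesis
    by (intro ubilinearI)
      (simp_all add: ulinearD[OF assms] lact_usc lact_scX lact.add_left lact.add_right)
qed

lemma ulinear_lact: "ulinear (\<lambda>q. lact q y)"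
proof -
  obtain K where "K > 0" "\<And>p x. norm (lact p x) \<le> K * unorm p * norm x"
    using lact_bound by blast
  then have "norm (lact p y) \<le> (K * norm y) * unorm p" for p
    by (metis mult.commute mult.left_commute)
  then show ?thesis unfolding ulinear_def by (auto simp: lact_usc lact.add_left)
qed

lemma ubilinear_psi: "ubilinear (\<lambda>p q. ract (lact p y) q)"
proof -
  obtain K1 where K1: "K1 > 0" "\<And>p x. norm (lact p x) \<le> K1 * unorm p * norm x"
    using lact_bound by blast
  obtain K2 where K2: "K2 > 0" "\<And>p x. norm (ract x p) \<le> K2 * unorm p * norm x"
    using ract_bound by blast
  have "norm (ract (lact p y) q) \<le> (K2 * K1 * norm y) * unorm p * unorm q" for p q
  proof -
    have "norm (ract (lact p y) q) \<le> K2 * unorm q * norm (lact p y)" using K2 by blast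
    also have "\<dots> \<le> K2 * unorm q * (K1 * unorm p * norm y)"
      using K1(2)[of p y] K2(1) by (intro mult_left_mono) (auto simp: unorm_nonneg)
    finally show ?thesis by (simp add: algebra_simps)
  qed
  then show ?thesis
    by (intro ubilinearI)
      (simp_all add: lact_usc lact_scX ract_usc ract_scX lact.add_left ract.add_left ract.add_right)
qed

lemma is_ptrep_ptlmult:
  assumes "is_ptrep r"
  shows "is_ptrep (ptlmult scA a r)"
proof -
  have "summable (\<lambda>n. unorm a * (unorm (fst (r n)) * unorm (snd (r n))))"
    using assms unfolding is_ptrep_def by (rule summable_mult)
  moreover have "norm (unorm (umul a (fst (r n))) * unorm (snd (r n)))
      \<le> unorm a * (unorm (fst (r n)) * unorm (snd (r n)))" for n
    using mult_right_mono[OF unorm_umul[of a "fst (r n)"] unorm_nonneg[of "snd (r n)"]]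
    by (simp add: unorm_nonneg mult.assoc)
  ultimately have "summable (\<lambda>n. unorm (umul a (fst (r n))) * unorm (snd (r n)))"
    by (rule summable_comparison_test')
  then show ?thesis unfolding is_ptrep_def ptlmult_def by simp
qed

lemma is_ptrep_ptrmult:
  assumes "is_ptrep r"
  shows "is_ptrep (ptrmult scA r a)"
proof -
  have "summable (\<lambda>n. unorm a * (unorm (fst (r n)) * unorm (snd (r n))))"
    using assms unfolding is_ptrep_def by (rule summable_mult)
  moreover have "norm (unorm (fst (r n)) * unorm (umul (snd (r n)) a))
      \<le> unorm a * (unorm (fst (r n)) * unorm (snd (r n)))" for n
    using mult_left_mono[OF unorm_umul[of "snd (r n)" a] unorm_nonneg[of "fst (r n)"]]
    by (simp add: unorm_nonneg algebra_simps)
  ultimately have "summable (\<lambda>n. unorm (fst (r n)) * unorm (umul (snd (r n)) a))"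
    by (rule summable_comparison_test')
  then show ?thesis unfolding is_ptrep_def ptrmult_def by simp
qed

(* The linear map on U# \<otimes> U# induced by B, evaluated at the tensor represented by r. *)
definition tensor_eval :: "('a \<times> complex \<Rightarrow> 'a \<times> complex \<Rightarrow> 'x) \<Rightarrow> 'a ptrep \<Rightarrow> 'x" where
  "tensor_eval B r = (\<Sum>n. B (fst (r n)) (snd (r n)))"

lemma summable_norm_tensor_eval:
  assumes "ubilinear B" "is_ptrep r"
  shows "summable (\<lambda>n. norm (B (fst (r n)) (snd (r n))))"
proof -
  obtain K where K: "\<And>p q. norm (B p q) \<le> K * unorm p * unorm q"
    using ubilinear_bound[OF assms(1)] by blast
  have "summable (\<lambda>n. K * (unorm (fst (r n)) * unorm (snd (r n))))"
    using assms(2) unfolding is_ptrep_def by (rule summable_mult)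
  moreover have "norm (norm (B (fst (r n)) (snd (r n)))) \<le> K * (unorm (fst (r n)) * unorm (snd (r n)))" for n
    using K[of "fst (r n)" "snd (r n)"] by (simp add: mult.assoc)
  ultimately show ?thesis by (rule summable_comparison_test')
qed

lemma summable_tensor_eval:
  "ubilinear B \<Longrightarrow> is_ptrep r \<Longrightarrow> summable (\<lambda>n. B (fst (r n)) (snd (r n)))"
  by (rule summable_norm_cancel[OF summable_norm_tensor_eval])

lemma tensor_eval_add:
  assumes "ubilinear B1" "ubilinear B2" "is_ptrep r"
  shows "tensor_eval (\<lambda>p q. B1 p q + B2 p q) r = tensor_eval B1 r + tensor_eval B2 r"
  unfolding tensor_eval_def
  by (rule suminf_add[symmetric]) (use assms summable_tensor_eval in blast)+

lemma tensor_eval_diff: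
  assumes "ubilinear B1" "ubilinear B2" "is_ptrep r"
  shows "tensor_eval (\<lambda>p q. B1 p q - B2 p q) r = tensor_eval B1 r - tensor_eval B2 r"
  unfolding tensor_eval_def
  by (rule suminf_diff[symmetric]) (use assms summable_tensor_eval in blast)+

lemma bounded_linear_tensor_eval:
  assumes "ubilinear B" "bounded_linear F" "is_ptrep r"
  shows "F (tensor_eval B r) = tensor_eval (\<lambda>p q. F (B p q)) r"
  unfolding tensor_eval_def
  using bounded_linear.suminf[OF assms(2) summable_tensor_eval[OF assms(1,3)]] by simp

lemma tensor_eval_ptflip: "tensor_eval B (ptflip r) = tensor_eval (\<lambda>p q. B q p) r"
  and tensor_eval_ptlmult: "tensor_eval B (ptlmult scA a r) = tensor_eval (\<lambda>p q. B (umul a p) q) r"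
  and tensor_eval_ptrmult: "tensor_eval B (ptrmult scA r a) = tensor_eval (\<lambda>p q. B p (umul q a)) r"
  unfolding tensor_eval_def ptflip_def ptlmult_def ptrmult_def by simp_all

lemma tensor_eval_ptdiff:
  assumes B: "ubilinear B" and r: "is_ptrep r" and s: "is_ptrep s"
  shows "tensor_eval B (ptdiff r s) = tensor_eval B r - tensor_eval B s"
proof -
  have sr: "(\<lambda>n. B (fst (r n)) (snd (r n))) sums tensor_eval B r"
    unfolding tensor_eval_def by (rule summable_sums[OF summable_tensor_eval[OF B r]])
  have ss: "(\<lambda>n. - B (fst (s n)) (snd (s n))) sums (- tensor_eval B s)"
    unfolding tensor_eval_def by (rule sums_minus[OF summable_sums[OF summable_tensor_eval[OF B s]]])
  have "(\<lambda>n. if even n then B (fst (r (n div 2))) (snd (r (n div 2)))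
      else - B (fst (s (n div 2))) (snd (s (n div 2)))) sums (tensor_eval B r - tensor_eval B s)"
    using sums_interleave[OF sr ss] by simp
  moreover have "(\<lambda>n. B (fst (ptdiff r s n)) (snd (ptdiff r s n))) = (\<lambda>n. if even n
      then B (fst (r (n div 2))) (snd (r (n div 2))) else - B (fst (s (n div 2))) (snd (s (n div 2))))"
    by (auto simp: ptdiff_def ubilinear_minus_left[OF B])
  ultimately have "(\<lambda>n. B (fst (ptdiff r s n)) (snd (ptdiff r s n))) sums (tensor_eval B r - tensor_eval B s)"
    by simp
  then show ?thesis unfolding tensor_eval_def by (rule sums_unique[symmetric])
qed

(* Equivalent representations are only identified by scalar bilinear forms, so Hahn-Banach
   is needed to identify the values of an X-valued bilinear map. *)
lemma tensor_eval_ptequiv: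
  assumes B: "ubilinear B" and r: "is_ptrep r" and s: "is_ptrep s" and "ptequiv scA r s"
  shows "tensor_eval B r = tensor_eval B s"
proof (rule ccontr)
  assume "tensor_eval B r \<noteq> tensor_eval B s"
  then obtain g :: "'x \<Rightarrow> complex" where g: "bounded_linear g" "\<And>k x. g (scX k x) = k * g x"
    "g (tensor_eval B r - tensor_eval B s) \<noteq> 0"
    using X.exists_complex_functional[of "tensor_eval B r - tensor_eval B s"] by auto
  interpret g: bounded_linear g by (fact g(1))
  obtain Kg where Kg: "\<And>x. norm (g x) \<le> norm x * Kg" "Kg > 0" using g.pos_bounded by blast
  obtain K where K: "K > 0" "\<And>p q. norm (B p q) \<le> K * unorm p * unorm q"
    using ubilinear_bound[OF B] by blast
  have "cbilform scA (\<lambda>p q. g (B p q))"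
    unfolding cbilform_def
  proof (intro conjI allI exI[of _ "Kg * K"])
    fix u v
    have "cmod (g (B u v)) \<le> norm (B u v) * Kg" using Kg(1) by simp
    also have "\<dots> \<le> (K * unorm u * unorm v) * Kg" using K(2) Kg(2) by (intro mult_right_mono) auto
    finally show "cmod (g (B u v)) \<le> (Kg * K) * unorm u * unorm v"
      by (simp add: algebra_simps)
  qed (simp_all add: ubilinearD[OF B] g.add g(2))
  then have "(\<Sum>n. g (B (fst (r n)) (snd (r n)))) = (\<Sum>n. g (B (fst (s n)) (snd (s n))))"
    using \<open>ptequiv scA r s\<close> unfolding ptequiv_def by blast
  then have "g (tensor_eval B r) = g (tensor_eval B s)"
    unfolding tensor_eval_def
    using g.suminf[OF summable_tensor_eval[OF B r]] g.suminf[OF summable_tensor_eval[OF B s]] by simp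
  then show False using g(3) by (simp add: g.diff)
qed

lemma norm_tensor_eval_le_ptnorm:
  assumes B: "ubilinear B"
  obtains K where "K > 0" "\<And>r. is_ptrep r \<Longrightarrow> norm (tensor_eval B r) \<le> K * ptnorm scA r"
proof -
  obtain K where K: "K > 0" "\<And>p q. norm (B p q) \<le> K * unorm p * unorm q"
    using ubilinear_bound[OF B] by blast
  have "norm (tensor_eval B r) \<le> K * ptnorm scA r" if r: "is_ptrep r" for r
  proof -
    let ?S = "{(\<Sum>n. unorm (fst (s n)) * unorm (snd (s n))) | s. is_ptrep s \<and> ptequiv scA r s}"
    have "norm (tensor_eval B r) / K \<le> x" if "x \<in> ?S" for x
    proof -
      obtain s where s: "x = (\<Sum>n. unorm (fst (s n)) * unorm (snd (s n)))" "is_ptrep s" "ptequiv scA r s"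
        using \<open>x \<in> ?S\<close> by blast
      have "norm (tensor_eval B s) \<le> (\<Sum>n. norm (B (fst (s n)) (snd (s n))))"
        unfolding tensor_eval_def by (rule summable_norm[OF summable_norm_tensor_eval[OF B s(2)]])
      also have "\<dots> \<le> (\<Sum>n. K * (unorm (fst (s n)) * unorm (snd (s n))))"
        using s(2) K(2) unfolding is_ptrep_def
        by (intro suminf_le summable_norm_tensor_eval[OF B s(2)] summable_mult) (simp_all add: mult.assoc)
      also have "\<dots> = K * x"
        using s(2) unfolding is_ptrep_def s(1) by (rule suminf_mult)
      finally show ?thesis
        using K(1) tensor_eval_ptequiv[OF B r s(2,3)] by (simp add: field_simps)
    qed
    moreover have "?S \<noteq> {}" using r unfolding ptequiv_def by blast
    ultimately have "norm (tensor_eval B r) / K \<le> Inf ?S" by (intro cInf_greatest)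
    then show ?thesis unfolding ptnorm_def using K(1) by (simp add: field_simps)
  qed
  with K(1) show ?thesis using that by blast
qed

end

section \<open>Consequences of a symmetric approximate diagonal\<close>

locale symmetric_diagonal = unitized_bimodule scA scX lm rm
  for scA :: "complex \<Rightarrow> 'a::{real_normed_algebra,banach} \<Rightarrow> 'a"
    and scX :: "complex \<Rightarrow> 'x::banach \<Rightarrow> 'x"
    and lm :: "'a \<Rightarrow> 'x \<Rightarrow> 'x" and rm :: "'x \<Rightarrow> 'a \<Rightarrow> 'x" +
  fixes \<Lambda> :: "'l set" and le :: "'l \<Rightarrow> 'l \<Rightarrow> bool" and t :: "'l \<Rightarrow> 'a ptrep"
  assumes diagonal: "sym_approx_diagonal scA \<Lambda> le t"
begin

abbreviation net where "net \<equiv> net_filter \<Lambda> le"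

abbreviation psi :: "'l \<Rightarrow> 'x \<Rightarrow> 'x" where "psi i y \<equiv> ppsi lm rm scX y (t i)"

lemma directed: "directed_set \<Lambda> le"
  and is_ptrep_diagonal: "i \<in> \<Lambda> \<Longrightarrow> is_ptrep (t i)"
  and diagonal_symmetric: "i \<in> \<Lambda> \<Longrightarrow> ptequiv scA (ptflip (t i)) (t i)"
  using diagonal unfolding sym_approx_diagonal_def by blast+

lemma diagonal_commutator_tendsto:
  "((\<lambda>i. ptnorm scA (ptdiff (ptlmult scA u (t i)) (ptrmult scA (t i) u))) \<longlongrightarrow> 0) net"
  and diagonal_pi_tendsto: "((\<lambda>i. unorm (umul (ptpi scA (t i)) u - u)) \<longlongrightarrow> 0) net"
  using diagonal unfolding sym_approx_diagonal_def net_to_0_iff_tendsto[OF directed] by blast+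

lemma eventually_net: "(\<And>i. i \<in> \<Lambda> \<Longrightarrow> P i) \<Longrightarrow> eventually P net"
  using eventually_mono[OF eventually_in_net_filter[OF directed]] by blast

lemma tendsto_net_transform:
  assumes "(f \<longlongrightarrow> c) net" "\<And>i. i \<in> \<Lambda> \<Longrightarrow> f i = g i"
  shows "(g \<longlongrightarrow> c) net"
  by (rule iffD1[OF tendsto_cong[OF eventually_net[OF assms(2)]] assms(1)])

lemma tendsto_net_dominated:
  fixes y :: "'l \<Rightarrow> 'v::real_normed_vector"
  assumes "\<And>i. i \<in> \<Lambda> \<Longrightarrow> norm (y i) \<le> K * f i" "(f \<longlongrightarrow> 0) net"
  shows "(y \<longlongrightarrow> 0) net"
  by (rule Lim_null_comparison[OF eventually_net tendsto_mult_right_zero]) (use assms in auto)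

lemma tensor_eval_diagonal_flip:
  assumes "ubilinear B" "i \<in> \<Lambda>"
  shows "tensor_eval B (t i) = tensor_eval (\<lambda>p q. B q p) (t i)"
  using tensor_eval_ptequiv[OF assms(1) is_ptrep_ptflip is_ptrep_diagonal diagonal_symmetric]
    assms(2) is_ptrep_diagonal
  by (simp add: tensor_eval_ptflip)

lemma tensor_eval_diagonal_commutator:
  assumes B: "ubilinear B"
  shows "((\<lambda>i. tensor_eval (\<lambda>p q. B (umul a p) q) (t i) - tensor_eval (\<lambda>p q. B p (umul q a)) (t i))
    \<longlongrightarrow> 0) net"
proof -
  obtain K where K: "\<And>r. is_ptrep r \<Longrightarrow> norm (tensor_eval B r) \<le> K * ptnorm scA r"
    using norm_tensor_eval_le_ptnorm[OF B] by blast
  show ?thesis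
  proof (rule tendsto_net_dominated[OF _ diagonal_commutator_tendsto[of a]])
    fix i assume i: "i \<in> \<Lambda>"
    have r: "is_ptrep (ptlmult scA a (t i))" "is_ptrep (ptrmult scA (t i) a)"
      using is_ptrep_ptlmult is_ptrep_ptrmult is_ptrep_diagonal[OF i] by blast+
    have "tensor_eval (\<lambda>p q. B (umul a p) q) (t i) - tensor_eval (\<lambda>p q. B p (umul q a)) (t i)
        = tensor_eval B (ptdiff (ptlmult scA a (t i)) (ptrmult scA (t i) a))"
      by (simp add: tensor_eval_ptdiff[OF B r] tensor_eval_ptlmult tensor_eval_ptrmult)
    then show "norm (tensor_eval (\<lambda>p q. B (umul a p) q) (t i) - tensor_eval (\<lambda>p q. B p (umul q a)) (t i))
        \<le> K * ptnorm scA (ptdiff (ptlmult scA a (t i)) (ptrmult scA (t i) a))"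
      using K[OF is_ptrep_ptdiff[OF r]] by simp
  qed
qed

lemma tensor_eval_diagonal_commutator':
  assumes B: "ubilinear B"
  shows "((\<lambda>i. tensor_eval (\<lambda>p q. B p (umul a q)) (t i) - tensor_eval (\<lambda>p q. B (umul p a) q) (t i))
    \<longlongrightarrow> 0) net"
proof -
  have "tensor_eval (\<lambda>p q. B q (umul a p)) (t i) - tensor_eval (\<lambda>p q. B (umul q a) p) (t i)
      = tensor_eval (\<lambda>p q. B p (umul a q)) (t i) - tensor_eval (\<lambda>p q. B (umul p a) q) (t i)"
    if "i \<in> \<Lambda>" for i
    using tensor_eval_diagonal_flip[OF ubilinear_lmult_snd[OF B] that]
      tensor_eval_diagonal_flip[OF ubilinear_rmult_fst[OF B] that] by simp
  then show ?thesis
    by (rule tendsto_net_transform[OF tensor_eval_diagonal_commutator[OF ubilinear_flip[OF B], of a]])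
qed

lemma ppsi_eq_tensor_eval: "ppsi lm rm scX y r = tensor_eval (\<lambda>p q. ract (lact p y) q) r"
  unfolding ppsi_def tensor_eval_def ..

lemma psi_diff:
  assumes "i \<in> \<Lambda>"
  shows "psi i (x - y) = psi i x - psi i y"
proof -
  have "psi i (x - y) = tensor_eval (\<lambda>p q. ract (lact p x) q - ract (lact p y) q) (t i)"
    unfolding ppsi_eq_tensor_eval tensor_eval_def by (simp add: lact.diff_right ract.diff_left)
  then show ?thesis
    unfolding ppsi_eq_tensor_eval
    using tensor_eval_diff[OF ubilinear_psi ubilinear_psi is_ptrep_diagonal[OF assms]] by simp
qed

lemma psi_minus: "i \<in> \<Lambda> \<Longrightarrow> psi i (- x) = - psi i x"
  using psi_diff[of i 0 x] psi_diff[of i 0 0] by simp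

lemma psi_commutator_tendsto: "((\<lambda>i. inner_derivation (psi i y) b) \<longlongrightarrow> 0) net"
proof -
  have "tensor_eval (\<lambda>p q. ract (lact (umul b p) y) q) (t i) - tensor_eval (\<lambda>p q. ract (lact p y) (umul q b)) (t i)
      = inner_derivation (psi i y) b" if "i \<in> \<Lambda>" for i
    unfolding inner_derivation_def ppsi_eq_tensor_eval
    using bounded_linear_tensor_eval[OF ubilinear_psi lact.bounded_linear_right is_ptrep_diagonal[OF that]]
      bounded_linear_tensor_eval[OF ubilinear_psi ract.bounded_linear_left is_ptrep_diagonal[OF that]]
    by (simp add: lact_ract lact_umul ract_umul)
  then show ?thesis
    by (rule tendsto_net_transform[OF tensor_eval_diagonal_commutator[OF ubilinear_psi[of y], where a = b]])
qed

lemma psi_balanced_tendsto: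
  fixes y :: 'x and b :: "'a \<times> complex"
  shows "((\<lambda>i. psi i (ract y b) - psi i (lact b y)) \<longlongrightarrow> 0) net"
proof -
  have "tensor_eval (\<lambda>p q. ract (lact p y) (umul b q)) (t i) - tensor_eval (\<lambda>p q. ract (lact (umul p b) y) q) (t i)
      = psi i (ract y b) - psi i (lact b y)" if "i \<in> \<Lambda>" for i
    unfolding ppsi_eq_tensor_eval by (simp add: lact_ract lact_umul ract_umul)
  then show ?thesis
    by (rule tendsto_net_transform[OF tensor_eval_diagonal_commutator'[OF ubilinear_psi[of y], where a = b]])
qed

lemma tensor_eval_pi: 
  assumes "i \<in> \<Lambda>"
  shows "tensor_eval (\<lambda>p q. lact p (lact q y)) (t i) = lact (ptpi scA (t i)) y"
proof -
  have "summable (\<lambda>n. umul (fst (t i n)) (snd (t i n)))"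
  proof (rule summable_comparison_test'[of "\<lambda>n. unorm (fst (t i n)) * unorm (snd (t i n))" 0])
    show "summable (\<lambda>n. unorm (fst (t i n)) * unorm (snd (t i n)))"
      using is_ptrep_diagonal[OF assms] unfolding is_ptrep_def .
    show "norm (umul (fst (t i n)) (snd (t i n))) \<le> unorm (fst (t i n)) * unorm (snd (t i n))" for n
      using norm_le_unorm unorm_umul order_trans by blast
  qed
  from lact.bounded_linear_left[THEN bounded_linear.suminf, OF this, of y]
  show ?thesis unfolding tensor_eval_def ptpi_def by (simp add: lact_umul)
qed

lemma tensor_eval_pi_tendsto: "((\<lambda>i. tensor_eval (\<lambda>p q. lact p (lact q y)) (t i) - y) \<longlongrightarrow> 0) net"
proof -
  obtain K where K: "\<And>p x. norm (lact p x) \<le> K * unorm p * norm x"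
    using lact_bound by blast
  have "((\<lambda>i. lact (ptpi scA (t i)) y - y) \<longlongrightarrow> 0) net"
  proof (rule tendsto_net_dominated[OF _ diagonal_pi_tendsto[of "(0, 1)"]])
    fix i
    have "lact (ptpi scA (t i)) y - y = lact (umul (ptpi scA (t i)) (0, 1) - (0, 1)) y"
      by (simp add: lact.diff_left lact_Pair)
    then show "norm (lact (ptpi scA (t i)) y - y) \<le> (K * norm y) * unorm (umul (ptpi scA (t i)) (0, 1) - (0, 1))"
      using K[of "umul (ptpi scA (t i)) (0, 1) - (0, 1)" y] by (simp add: algebra_simps)
  qed
  then show ?thesis by (rule tendsto_net_transform) (simp add: tensor_eval_pi)
qed

end

section \<open>Jordan derivations\<close>

locale jordan_derivation_on_diagonal = symmetric_diagonal scA scX lm rm \<Lambda> le t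
  for scA :: "complex \<Rightarrow> 'a::{real_normed_algebra,banach} \<Rightarrow> 'a"
    and scX :: "complex \<Rightarrow> 'x::banach \<Rightarrow> 'x"
    and lm :: "'a \<Rightarrow> 'x \<Rightarrow> 'x" and rm :: "'x \<Rightarrow> 'a \<Rightarrow> 'x"
    and \<Lambda> :: "'l set" and le :: "'l \<Rightarrow> 'l \<Rightarrow> bool" and t :: "'l \<Rightarrow> 'a ptrep" +
  fixes D :: "'a \<Rightarrow> 'x"
  assumes bounded: "bdd_clinear scA scX D"
    and jordan: "jordan_derivation lm rm D"
begin

definition Dsharp :: "'a \<times> complex \<Rightarrow> 'x" where
  "Dsharp p = D (fst p)"

definition defect :: "'a \<times> complex \<Rightarrow> 'a \<times> complex \<Rightarrow> 'x" where
  "defect p q = Dsharp (umul p q) - ract (Dsharp p) q - lact p (Dsharp q)"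

abbreviation xi :: "'l \<Rightarrow> 'x" where "xi i \<equiv> pPhi lm scX D (t i)"

definition remainder :: "'l \<Rightarrow> 'a \<times> complex \<Rightarrow> 'x" where
  "remainder i c = Dsharp c + psi i (Dsharp c) - inner_derivation (xi i) c"

lemma D_add: "D (a + b) = D a + D b"
  and D_scA: "D (scA c a) = scX c (D a)"
  using bounded unfolding bdd_clinear_def by blast+

lemma ulinear_Dsharp: "ulinear Dsharp"
proof -
  obtain K where K: "\<And>a. norm (D a) \<le> K * norm a"
    using bounded unfolding bdd_clinear_def by blast
  have "norm (Dsharp p) \<le> \<bar>K\<bar> * unorm p" for p
  proof -
    have "norm (Dsharp p) \<le> \<bar>K\<bar> * norm (fst p)"
      unfolding Dsharp_def using K[of "fst p"] by (meson abs_ge_self mult_right_mono norm_ge_zero order_trans)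
    also have "\<dots> \<le> \<bar>K\<bar> * unorm p" unfolding unorm_def by (intro mult_left_mono) auto
    finally show ?thesis .
  qed
  then show ?thesis
    unfolding ulinear_def
    by (intro conjI exI[of _ "\<bar>K\<bar>"] allI) (simp_all add: Dsharp_def D_add D_scA uscale_def)
qed

lemma Dsharp_jordan:
  "Dsharp (umul p q + umul q p) = ract (Dsharp p) q + lact p (Dsharp q) + ract (Dsharp q) p + lact q (Dsharp p)"
proof (cases p; cases q)
  fix a c b d assume pq: "p = (a, c)" "q = (b, d)"
  have "D (a * b) + D (b * a) = rm (D a) b + lm a (D b) + rm (D b) a + lm b (D a)"
    using jordan unfolding jordan_derivation_def by (metis D_add)
  then show ?thesis
    unfolding pq Dsharp_def by (simp add: umul_Pair lact_Pair ract_Pair D_add D_scA algebra_simps)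
qed

lemma defect_antisym: "defect q p = - defect p q"
  using Dsharp_jordan[of p q] ulinearD(1)[OF ulinear_Dsharp, of "umul p q" "umul q p"]
  unfolding defect_def by (simp add: algebra_simps)

lemma ubilinear_lact_defect: "ubilinear (\<lambda>p q. lact p (defect q a))"
proof -
  have "ubilinear (\<lambda>p q. lact p (Dsharp (umul q a)) - ract (lact p (Dsharp q)) a - lact p (lact q (Dsharp a)))"
    by (intro ubilinear_diff ubilinear_rmult_snd ubilinear_lact ulinear_Dsharp ulinear_lact
        ubilinear_compose[OF xlinear_ract])
  then show ?thesis
    by (simp add: defect_def lact.diff_right lact_ract)
qed

lemma pPhi_eq_tensor_eval: "pPhi lm scX D r = tensor_eval (\<lambda>p q. lact p (Dsharp q)) r"
  unfolding pPhi_def tensor_eval_def Dsharp_def ..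

lemma ubilinear_lact_Dsharp: "ubilinear (\<lambda>p q. lact p (Dsharp q))"
  by (rule ubilinear_lact[OF ulinear_Dsharp])

lemma lact_xi_eq: "i \<in> \<Lambda> \<Longrightarrow> lact a (xi i) = tensor_eval (\<lambda>p q. lact (umul a p) (Dsharp q)) (t i)"
  unfolding pPhi_eq_tensor_eval
  by (simp add: bounded_linear_tensor_eval[OF ubilinear_lact_Dsharp lact.bounded_linear_right
        is_ptrep_diagonal] lact_umul)

lemma ract_xi_eq:
  assumes "i \<in> \<Lambda>"
  shows "ract (xi i) a = tensor_eval (\<lambda>p q. lact p (Dsharp (umul q a))) (t i)
    - tensor_eval (\<lambda>p q. lact p (lact q (Dsharp a))) (t i) - tensor_eval (\<lambda>p q. lact p (defect q a)) (t i)"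
proof -
  note B = ubilinear_lact_Dsharp and r = is_ptrep_diagonal[OF assms]
  have "ract (xi i) a = tensor_eval (\<lambda>p q. ract (lact p (Dsharp q)) a) (t i)"
    unfolding pPhi_eq_tensor_eval by (rule bounded_linear_tensor_eval[OF B ract.bounded_linear_left r])
  also have "\<dots> = tensor_eval (\<lambda>p q. (lact p (Dsharp (umul q a)) - lact p (lact q (Dsharp a)))
      - lact p (defect q a)) (t i)"
    by (simp add: defect_def lact.diff_right lact_ract)
  finally show ?thesis
    by (simp add: tensor_eval_diff[OF ubilinear_diff[OF ubilinear_rmult_snd[OF B] ubilinear_lact[OF ulinear_lact]]
          ubilinear_lact_defect r] tensor_eval_diff[OF ubilinear_rmult_snd[OF B] ubilinear_lact[OF ulinear_lact] r])
qed

lemma tensor_eval_lact_defect_eq: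
  assumes "i \<in> \<Lambda>"
  shows "tensor_eval (\<lambda>p q. lact p (defect q a)) (t i) = psi i (Dsharp a)
    + tensor_eval (\<lambda>p q. lact (umul p a) (Dsharp q)) (t i) - tensor_eval (\<lambda>p q. lact p (Dsharp (umul a q))) (t i)"
proof -
  note B = ubilinear_lact_Dsharp and r = is_ptrep_diagonal[OF assms]
  have "tensor_eval (\<lambda>p q. lact p (defect q a)) (t i) = tensor_eval (\<lambda>p q. (ract (lact p (Dsharp a)) q
      + lact (umul p a) (Dsharp q)) - lact p (Dsharp (umul a q))) (t i)"
    by (subst defect_antisym)
      (simp add: defect_def lact.diff_right lact.minus_right lact.add_right lact_ract lact_umul algebra_simps)
  then show ?thesis
    unfolding ppsi_eq_tensor_eval
    by (simp add: tensor_eval_diff[OF ubilinear_add[OF ubilinear_psi ubilinear_rmult_fst[OF B]] ubilinear_lmult_snd[OF B] r]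
        tensor_eval_add[OF ubilinear_psi ubilinear_rmult_fst[OF B] r])
qed

(* a \<xi>_i - \<xi>_i a differs from D a + \<psi>_i (D a) only by commutators of t_i with a and by
   \<pi>(t_i) D a - D a. *)
lemma remainder_tendsto: "((\<lambda>i. remainder i a) \<longlongrightarrow> 0) net"
proof -
  define T1 where "T1 i = tensor_eval (\<lambda>p q. lact (umul a p) (Dsharp q)) (t i)" for i
  define T2 where "T2 i = tensor_eval (\<lambda>p q. lact p (Dsharp (umul q a))) (t i)" for i
  define T3 where "T3 i = tensor_eval (\<lambda>p q. lact p (lact q (Dsharp a))) (t i)" for i
  define T4 where "T4 i = tensor_eval (\<lambda>p q. lact p (Dsharp (umul a q))) (t i)" for i
  define T5 where "T5 i = tensor_eval (\<lambda>p q. lact (umul p a) (Dsharp q)) (t i)" for i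
  have "((\<lambda>i. (T4 i - T5 i) - (T1 i - T2 i) - (T3 i - Dsharp a)) \<longlongrightarrow> 0) net"
    unfolding T1_def T2_def T3_def T4_def T5_def
    by (intro tendsto_diff_zero tensor_eval_pi_tendsto tensor_eval_diagonal_commutator
        tensor_eval_diagonal_commutator' ubilinear_lact_Dsharp)
  moreover have "(T4 i - T5 i) - (T1 i - T2 i) - (T3 i - Dsharp a) = remainder i a" if "i \<in> \<Lambda>" for i
    unfolding remainder_def inner_derivation_def lact_xi_eq[OF that] ract_xi_eq[OF that]
      tensor_eval_lact_defect_eq[OF that] T1_def T2_def T3_def T4_def T5_def
    by (simp add: algebra_simps)
  ultimately show ?thesis by (rule tendsto_net_transform)
qed

(* The \<xi>_i-terms cancel because an inner derivation is a derivation. *)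
lemma twice_defect_eq:
  fixes a b :: "'a \<times> complex"
  assumes i: "i \<in> \<Lambda>"
  defines "y \<equiv> Dsharp a" and "z \<equiv> Dsharp b"
  shows "2 *\<^sub>R (defect a b + psi i (defect a b)) =
    remainder i (umul a b) - remainder i (umul b a)
    + inner_derivation (remainder i a) b - inner_derivation (remainder i b) a
    - inner_derivation (psi i y) b + inner_derivation (psi i z) a
    - (psi i (ract y b) - psi i (lact b y)) + (psi i (ract z a) - psi i (lact a z))"
proof -
  have ab: "defect a b = Dsharp (umul a b) - ract y b - lact a z"
    unfolding defect_def y_def z_def ..
  have ba: "defect a b = - (Dsharp (umul b a) - ract z a - lact b y)"
    using defect_antisym[of a b] unfolding defect_def y_def z_def by simp
  have "2 *\<^sub>R (defect a b + psi i (defect a b)) = (defect a b + psi i (defect a b)) + (defect a b + psi i (defect a b))"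
    by (rule scaleR_2)
  also have "\<dots> = (Dsharp (umul a b) - ract y b - lact a z)
      + (psi i (Dsharp (umul a b)) - psi i (ract y b) - psi i (lact a z))
      + (- (Dsharp (umul b a) - ract z a - lact b y))
      + (- (psi i (Dsharp (umul b a)) - psi i (ract z a) - psi i (lact b y)))"
    by (subst (1 2) ab, subst (1 2) ba) (simp add: psi_diff[OF i] psi_minus[OF i])
  also have "\<dots> = remainder i (umul a b) - remainder i (umul b a)
    + inner_derivation (remainder i a) b - inner_derivation (remainder i b) a
    - inner_derivation (psi i y) b + inner_derivation (psi i z) a
    - (psi i (ract y b) - psi i (lact b y)) + (psi i (ract z a) - psi i (lact a z))"
    unfolding remainder_def y_def[symmetric] z_def[symmetric] inner_derivation_umul
    by (simp add: inner_derivation_def lact.diff_right lact.add_right ract.diff_left ract.add_left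
        algebra_simps)
  finally show ?thesis .
qed

lemma defect_psi_tendsto: "((\<lambda>i. defect a b + psi i (defect a b)) \<longlongrightarrow> 0) net"
proof -
  have "((\<lambda>i. remainder i (umul a b) - remainder i (umul b a)
    + inner_derivation (remainder i a) b - inner_derivation (remainder i b) a
    - inner_derivation (psi i (Dsharp a)) b + inner_derivation (psi i (Dsharp b)) a
    - (psi i (ract (Dsharp a) b) - psi i (lact b (Dsharp a)))
    + (psi i (ract (Dsharp b) a) - psi i (lact a (Dsharp b)))) \<longlongrightarrow> 0) net"
    by (intro tendsto_add_zero tendsto_diff_zero remainder_tendsto psi_commutator_tendsto
        psi_balanced_tendsto bounded_linear.tendsto_zero[OF bounded_linear_inner_derivation])
  then have "((\<lambda>i. 2 *\<^sub>R (defect a b + psi i (defect a b))) \<longlongrightarrow> 0) net"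
    by (rule tendsto_net_transform) (simp add: twice_defect_eq)
  from tendsto_scaleR[OF tendsto_const[of "1/2"] this] show ?thesis by simp
qed

(* The defect commutes with U, so \<psi>_i maps it to \<pi>(t_i) times itself, which tends to it. *)
lemma defect_eq_zero: "defect a b = 0"
proof -
  define x where "x = defect a b"
  have x_psi: "((\<lambda>i. x + psi i x) \<longlongrightarrow> 0) net" unfolding x_def by (rule defect_psi_tendsto)
  have central: "lact c x = ract x c" for c
  proof -
    have "((\<lambda>i. inner_derivation (x + psi i x) c - inner_derivation (psi i x) c) \<longlongrightarrow> 0) net"
      by (intro tendsto_diff_zero psi_commutator_tendsto
          bounded_linear.tendsto_zero[OF bounded_linear_inner_derivation x_psi])
    then have "((\<lambda>i. inner_derivation x c) \<longlongrightarrow> 0) net"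
      by (simp add: inner_derivation_def lact.add_right ract.add_left)
    then show ?thesis
      by (simp add: tendsto_const_iff[OF net_filter_nontrivial[OF directed]] inner_derivation_def)
  qed
  have "((\<lambda>i. tensor_eval (\<lambda>p q. lact p (lact q x)) (t i) - x) \<longlongrightarrow> 0) net"
    by (rule tensor_eval_pi_tendsto)
  then have "((\<lambda>i. psi i x - x) \<longlongrightarrow> 0) net"
    by (rule tendsto_net_transform) (simp add: ppsi_eq_tensor_eval lact_ract central)
  with x_psi have "((\<lambda>i. 2 *\<^sub>R x) \<longlongrightarrow> 0) net"
    by (auto dest: tendsto_diff_zero simp: scaleR_2)
  then show ?thesis
    by (simp add: tendsto_const_iff[OF net_filter_nontrivial[OF directed]] x_def)
qed

theorem is_derivation: "is_derivation lm rm D"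
  unfolding is_derivation_def
proof (intro allI)
  fix a b
  from defect_eq_zero[of "(a, 0)" "(b, 0)"] show "D (a * b) = rm (D a) b + lm a (D b)"
    unfolding defect_def Dsharp_def by (simp add: umul_Pair lact_Pair ract_Pair algebra_simps)
qed

end

theorem theorem5p1:
  fixes scA :: "complex \<Rightarrow> 'a::{real_normed_algebra,banach} \<Rightarrow> 'a"
    and scX :: "complex \<Rightarrow> 'x::banach \<Rightarrow> 'x"
    and lm :: "'a \<Rightarrow> 'x \<Rightarrow> 'x" and rm :: "'x \<Rightarrow> 'a \<Rightarrow> 'x"
    and \<Lambda> :: "'l set" and le :: "'l \<Rightarrow> 'l \<Rightarrow> bool"
    and t :: "'l \<Rightarrow> 'a ptrep"
    and D :: "'a \<Rightarrow> 'x"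
  assumes "complex_banach_algebra scA"
    and "complex_banach_space scX"
    and "banach_bimodule scA scX lm rm"
    and "sym_approx_diagonal scA \<Lambda> le t"
    and "\<forall>x. net_bounded \<Lambda> (\<lambda>i. ppsi lm rm scX x (t i))"
    and "\<forall>T. bdd_clinear scA scX T \<and> jordan_derivation lm rm T \<longrightarrow>
           net_bounded \<Lambda> (\<lambda>i. pPhi lm scX T (t i))"
    and "bdd_clinear scA scX D"
    and "jordan_derivation lm rm D"
  shows "is_derivation lm rm D"
proof -
  interpret jordan_derivation_on_diagonal scA scX lm rm \<Lambda> le t D
    by unfold_locales (fact assms)+
  show ?thesis by (rule is_derivation)
qed

end
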